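(* Consider a robot with configuration $q(t)\in\mathbb{R}^n$ evolving according to $$M(q)\ddot q + C(q,\dot q)\dot q + g(q) = u + f(q,\dot q,w),$$ under the control law $$u = M(q)\ddot q_r + C(q,\dot q)\dot q_r + g(q) - K s - \phi(q,\dot q)\hat a,$$ where $q_d(t)$ is a desired trajectory with bounded derivatives, $\tilde q = q - q_d$, $\dot q_r = \dot q_d - \Lambda \tilde q$, and $s = \dot q - \dot q_r = \dot{\tilde q} + \Lambda\tilde q$; and with the parameter estimate $\hat a$ and matrix $P$ evolving according to the adaptation law $$\dot{\hat a} = -\lambda \hat a - P\phi^\top R^{-1}(\phi\hat a - y) + P\phi^\top s,\qquad \dot P = -2\lambda P + Q - P\phi^\top R^{-1}\phi P,$$ where $y(t) = f(t) + \epsilon(t)$ is a measurement of the unmodeled force with bounded measurement noise $\epsilon(t)$. Let $a(t)$ be a (possibly time-varying) linear weight vector and define the representation error $d(t) = f(q,\dot q,w) - \phi(q,\dot q)a(w)$. Then the position tracking error $\tilde q$ converges exponentially to the ball $$\lim_{t\to\infty}\|\tilde q\| \le \sup_t\big[C_1\|d(t)\| + C_2\|\epsilon(t)\| + C_3(\lambda\|a(t)\| + \|\dot a(t)\|)\big],$$ where $C_1,C_2,C_3$ are bounded constants depending on $\phi, R, Q, K, \Lambda, M$ and $\lambda$.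
   Context: $M(q)$ is the symmetric positive definite inertia matrix, $C(q,\dot q)$ the Coriolis matrix (so that $\dot M - 2C$ is skew-symmetric), $g(q)$ the gravity vector, $u\in\mathbb{R}^n$ the control force, $f(q,\dot q,w)\in\mathbb{R}^n$ the unmodeled dynamics depending on an unknown, possibly time-varying environment condition $w$. $\phi(q,\dot q)\in\mathbb{R}^{n\times h}$ is a given (learned) basis/representation function and $\hat a\in\mathbb{R}^h$ an online estimate of the linear coefficients. The gains $K$, $\Lambda$ are positive definite matrices, $Q$ and $R$ are positive definite gain matrices, $\lambda$ is a damping gain, and $P$ is a covariance-like matrix initialized symmetric positive definite. *)

theory Defs
  imports "HOL-Analysis.Analysis" "HOL-Library.Liminf_Limsup"
begin

definition pos_def :: "real^'n^'n \<Rightarrow> bool" where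
  "pos_def A \<longleftrightarrow> transpose A = A \<and> (\<forall>x. x \<noteq> 0 \<longrightarrow> x \<bullet> (A *v x) > 0)"

definition skew_symmetric :: "real^'n^'n \<Rightarrow> bool" where
  "skew_symmetric A \<longleftrightarrow> transpose A = - A"

end

theory Submission
  imports Defs
begin

text \<open>Along the closed loop, the Lyapunov function V = s \<bullet> M(q) s + e \<bullet> inv(P) e, with s the sliding
  variable and e = ah - a the parameter error, satisfies V' \<le> - \<gamma> V + G \<beta>^2, where \<beta> collects the
  representation error, the measurement noise and the drift lam |a| + |a'|: the Coriolis terms cancel
  because M' - 2 C is skew symmetric, the adaptation law cancels the coupling between s and e, and
  the Riccati equation keeps P symmetric positive definite and, after a warm-up time, bounded above.
  Hence V controls |s|^2, and the tracking error q - qd, the output of the stable filter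
  x' = s - \<Lambda> x driven by s, converges exponentially to a ball of radius proportional to sup \<beta>.
  The bounds on V and on |q - qd|^2 both come from one comparison lemma for scalar linear
  differential inequalities.\<close>

section \<open>Matrices and quadratic forms\<close>

lemma inner_matrix_vector_mult_transpose:
  fixes A :: "real^'m^'n"
  shows "x \<bullet> (A *v y) = (transpose A *v x) \<bullet> y"
  by (simp add: dot_lmul_matrix)

lemma inner_matrix_vector_mult_commute:
  fixes A :: "real^'n^'n"
  assumes "transpose A = A"
  shows "x \<bullet> (A *v y) = y \<bullet> (A *v x)"
  using inner_matrix_vector_mult_transpose[of x A y] assms by (simp add: inner_commute)

lemma norm_matrix_vector_mult_le:
  fixes A :: "real^'m^'n"
  shows "norm (A *v x) \<le> norm A * norm x"
proof -
  have row: "((A *v x) $ i)\<^sup>2 \<le> (norm (A $ i))\<^sup>2 * (norm x)\<^sup>2" for i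
  proof -
    have "\<bar>(A *v x) $ i\<bar> \<le> norm (A $ i) * norm x"
      by (simp add: matrix_mult_dot Cauchy_Schwarz_ineq2)
    then show ?thesis
      by (metis abs_ge_zero power2_abs power_mono power_mult_distrib)
  qed
  have "norm (A *v x) = sqrt (\<Sum>i\<in>UNIV. ((A *v x) $ i)\<^sup>2)"
    by (simp add: norm_vec_def L2_set_def)
  also have "\<dots> \<le> sqrt (\<Sum>i\<in>UNIV. (norm (A $ i))\<^sup>2 * (norm x)\<^sup>2)"
    using row by (intro real_sqrt_le_mono sum_mono)
  also have "\<dots> = sqrt (\<Sum>i\<in>UNIV. (norm (A $ i))\<^sup>2) * norm x"
    by (simp add: sum_distrib_right[symmetric] real_sqrt_mult)
  also have "\<dots> = norm A * norm x"
    by (simp add: norm_vec_def L2_set_def)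
  finally show ?thesis .
qed

lemma norm_transpose:
  fixes A :: "real^'m^'n"
  shows "norm (transpose A) = norm A"
proof -
  have "(norm (transpose A))\<^sup>2 = (\<Sum>j\<in>UNIV. \<Sum>i\<in>UNIV. A$i$j * A$i$j)"
    unfolding power2_norm_eq_inner by (simp add: inner_vec_def transpose_def)
  also have "\<dots> = (norm A)\<^sup>2"
    unfolding power2_norm_eq_inner by (subst sum.swap) (simp add: inner_vec_def)
  finally show ?thesis by simp
qed

lemma norm_matrix_mult_le:
  fixes A :: "real^'m^'n" and B :: "real^'k^'m"
  shows "norm (A ** B) \<le> norm A * norm B"
proof -
  have row: "(norm ((A ** B) $ i))\<^sup>2 \<le> (norm (A $ i))\<^sup>2 * (norm B)\<^sup>2" for i
  proof -
    have "(A ** B) $ i = transpose B *v (A $ i)"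
      by (simp add: vec_eq_iff matrix_matrix_mult_def matrix_vector_mult_def transpose_def mult.commute)
    then have "norm ((A ** B) $ i) \<le> norm (A $ i) * norm B"
      using norm_matrix_vector_mult_le[of "transpose B" "A $ i"] by (simp add: norm_transpose mult.commute)
    then show ?thesis
      by (metis norm_ge_zero power_mono power_mult_distrib)
  qed
  have "norm (A ** B) = sqrt (\<Sum>i\<in>UNIV. (norm ((A ** B) $ i))\<^sup>2)"
    by (simp add: norm_vec_def L2_set_def)
  also have "\<dots> \<le> sqrt (\<Sum>i\<in>UNIV. (norm (A $ i))\<^sup>2 * (norm B)\<^sup>2)"
    using row by (intro real_sqrt_le_mono sum_mono)
  also have "\<dots> = sqrt (\<Sum>i\<in>UNIV. (norm (A $ i))\<^sup>2) * norm B"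
    by (simp add: sum_distrib_right[symmetric] real_sqrt_mult)
  also have "\<dots> = norm A * norm B"
    by (simp add: norm_vec_def L2_set_def)
  finally show ?thesis .
qed

lemma norm_matrix_mult3_le:
  fixes A :: "real^'m^'n" and B :: "real^'k^'m" and C :: "real^'l^'k"
  shows "norm (A ** B ** C) \<le> norm A * norm B * norm C"
  by (meson norm_matrix_mult_le mult_right_mono norm_ge_zero order_trans)

lemma bounded_bilinear_matrix_vector_mult: "bounded_bilinear (\<lambda>(A::real^'m^'n) x. A *v x)"
proof
  fix A A' :: "real^'m^'n" and x x' :: "real^'m" and r :: real
  show "(A + A') *v x = A *v x + A' *v x" by (simp add: matrix_vector_mult_add_rdistrib)
  show "A *v (x + x') = A *v x + A *v x'" by (simp add: matrix_vector_right_distrib)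
  show "(r *\<^sub>R A) *v x = r *\<^sub>R (A *v x)"
    by (simp add: vec_eq_iff matrix_vector_mult_def sum_distrib_left mult.assoc)
  show "A *v (r *\<^sub>R x) = r *\<^sub>R (A *v x)"
    by (simp add: vec_eq_iff matrix_vector_mult_def sum_distrib_left mult.left_commute)
  show "\<exists>K. \<forall>A x. norm (A *v x) \<le> norm (A::real^'m^'n) * norm (x::real^'m) * K"
    by (rule exI[of _ 1]) (simp add: norm_matrix_vector_mult_le)
qed

lemma bounded_bilinear_matrix_mult: "bounded_bilinear (\<lambda>(A::real^'m^'n) (B::real^'k^'m). A ** B)"
proof
  fix A A' :: "real^'m^'n" and B B' :: "real^'k^'m" and r :: real
  show "(A + A') ** B = A ** B + A' ** B"
    by (simp add: vec_eq_iff matrix_matrix_mult_def sum.distrib distrib_right)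
  show "A ** (B + B') = A ** B + A ** B'" by (simp add: matrix_add_ldistrib)
  show "(r *\<^sub>R A) ** B = r *\<^sub>R (A ** B)"
    by (simp add: vec_eq_iff matrix_matrix_mult_def sum_distrib_left mult.assoc)
  show "A ** (r *\<^sub>R B) = r *\<^sub>R (A ** B)"
    by (simp add: vec_eq_iff matrix_matrix_mult_def sum_distrib_left mult.left_commute)
  show "\<exists>K. \<forall>A B. norm (A ** B) \<le> norm (A::real^'m^'n) * norm (B::real^'k^'m) * K"
    by (rule exI[of _ 1]) (simp add: norm_matrix_mult_le)
qed

lemma bounded_linear_transpose: "bounded_linear (transpose :: real^'m^'n \<Rightarrow> real^'n^'m)"
proof
  fix A B :: "real^'m^'n" and r :: real
  show "transpose (A + B) = transpose A + transpose B" by (simp add: vec_eq_iff transpose_def)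
  show "transpose (r *\<^sub>R A) = r *\<^sub>R transpose A" by (rule transpose_scalar)
  show "\<exists>K. \<forall>A::real^'m^'n. norm (transpose A) \<le> norm A * K"
    by (intro exI[of _ 1]) (simp add: norm_transpose)
qed

lemmas matrix_vector_mult_diff_left = bounded_bilinear.diff_left[OF bounded_bilinear_matrix_vector_mult]
  and matrix_vector_mult_diff_right = bounded_bilinear.diff_right[OF bounded_bilinear_matrix_vector_mult]
  and matrix_vector_mult_scaleR_left = bounded_bilinear.scaleR_left[OF bounded_bilinear_matrix_vector_mult]
  and matrix_vector_mult_minus_left = bounded_bilinear.minus_left[OF bounded_bilinear_matrix_vector_mult]
  and matrix_mult_diff_left = bounded_bilinear.diff_left[OF bounded_bilinear_matrix_mult]
  and matrix_mult_diff_right = bounded_bilinear.diff_right[OF bounded_bilinear_matrix_mult]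

lemmas transpose_add = linear_add[OF bounded_linear.linear[OF bounded_linear_transpose]]
  and transpose_diff = linear_diff[OF bounded_linear.linear[OF bounded_linear_transpose]]

lemma abs_quadratic_form_le:
  fixes A :: "real^'n^'n"
  shows "\<bar>x \<bullet> (A *v x)\<bar> \<le> norm A * (norm x)\<^sup>2"
proof -
  have "\<bar>x \<bullet> (A *v x)\<bar> \<le> norm x * (norm A * norm x)"
    by (meson Cauchy_Schwarz_ineq2 mult_left_mono norm_ge_zero norm_matrix_vector_mult_le order_trans)
  then show ?thesis by (simp add: power2_eq_square mult_ac)
qed

lemma inner_sylvester_le:
  fixes E P A :: "real^'n^'n"
  assumes "norm P \<le> b" "norm A \<le> a"
  shows "2 * (E \<bullet> ((- 2 * lam) *\<^sub>R E - (P ** A ** E + E ** A ** transpose P)))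
    \<le> (4 * \<bar>lam\<bar> + 4 * (b * a)) * (E \<bullet> E)"
proof -
  have cross: "- (E \<bullet> X) \<le> b * a * (E \<bullet> E)" if "norm X \<le> b * a * norm E" for X
  proof -
    have "- (E \<bullet> X) \<le> norm E * norm X" using Cauchy_Schwarz_ineq2[of E X] by linarith
    also have "\<dots> \<le> norm E * (b * a * norm E)" using that by (intro mult_left_mono) auto
    finally show ?thesis by (simp add: power2_norm_eq_inner[symmetric] power2_eq_square mult_ac)
  qed
  have ba: "norm P * norm A \<le> b * a"
    using assms by (intro mult_mono) (auto intro: order_trans[OF norm_ge_zero])
  have "norm (P ** A ** E) \<le> norm P * norm A * norm E" by (rule norm_matrix_mult3_le)
  also have "\<dots> \<le> b * a * norm E" using ba by (intro mult_right_mono) auto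
  finally have X1: "- (E \<bullet> (P ** A ** E)) \<le> b * a * (E \<bullet> E)" by (rule cross)
  have "norm (E ** A ** transpose P) \<le> norm E * norm A * norm P"
    using norm_matrix_mult3_le by (metis norm_transpose)
  also have "\<dots> = norm P * norm A * norm E" by (simp add: mult_ac)
  also have "\<dots> \<le> b * a * norm E" using ba by (intro mult_right_mono) auto
  finally have X2: "- (E \<bullet> (E ** A ** transpose P)) \<le> b * a * (E \<bullet> E)" by (rule cross)
  have "- (lam * (E \<bullet> E)) \<le> \<bar>lam\<bar> * (E \<bullet> E)"
    using mult_right_mono[OF abs_ge_minus_self[of lam] inner_ge_zero[of E]] by simp
  moreover have "2 * (E \<bullet> ((- 2 * lam) *\<^sub>R E - (P ** A ** E + E ** A ** transpose P)))
      = - 4 * (lam * (E \<bullet> E)) - 2 * (E \<bullet> (P ** A ** E)) - 2 * (E \<bullet> (E ** A ** transpose P))"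
    by (simp add: inner_diff_right inner_add_right algebra_simps)
  moreover have "(4 * \<bar>lam\<bar> + 4 * (b * a)) * (E \<bullet> E) = 4 * (\<bar>lam\<bar> * (E \<bullet> E)) + 4 * (b * a * (E \<bullet> E))"
    by (simp add: algebra_simps)
  ultimately show ?thesis using X1 X2 by linarith
qed

lemma norm_matrix_le_of_operator_bound:
  fixes A :: "real^'m^'n"
  assumes "\<And>x. norm (A *v x) \<le> b * norm x"
  shows "norm A \<le> real CARD('n) * real CARD('m) * b"
proof -
  have entry: "\<bar>A $ i $ j\<bar> \<le> b" for i j
  proof -
    have "(A *v axis j 1) $ i = A $ i $ j"
      by (simp add: matrix_vector_mult_def axis_def if_distrib cong: if_cong)
    then have "\<bar>A $ i $ j\<bar> \<le> norm (A *v axis j 1)" by (metis component_le_norm_cart)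
    also have "\<dots> \<le> b" using assms[of "axis j 1"] by simp
    finally show ?thesis .
  qed
  have "norm A \<le> (\<Sum>i\<in>UNIV. norm (A $ i))"
    unfolding norm_vec_def by (rule L2_set_le_sum) simp
  also have "\<dots> \<le> (\<Sum>i\<in>(UNIV::'n set). \<Sum>j\<in>(UNIV::'m set). b)"
    using entry by (intro sum_mono order_trans[OF norm_le_l1_cart]) auto
  finally show ?thesis by simp
qed

section \<open>Positive definite matrices\<close>

lemma pos_def_quadratic_lower_bound:
  fixes A :: "real^'n^'n"
  assumes "pos_def A"
  obtains c where "c > 0" "\<And>x. c * (norm x)\<^sup>2 \<le> x \<bullet> (A *v x)"
proof -
  have cont: "continuous_on (sphere 0 1) (\<lambda>x::real^'n. x \<bullet> (A *v x))"
    by (intro continuous_intros)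
  have ne: "sphere (0::real^'n) 1 \<noteq> {}"
    using norm_axis_1 by (metis mem_sphere_0 empty_iff)
  obtain x0 where x0: "x0 \<in> sphere 0 1"
    and min: "\<And>y. y \<in> sphere 0 1 \<Longrightarrow> x0 \<bullet> (A *v x0) \<le> y \<bullet> (A *v y)"
    using continuous_attains_inf[OF compact_sphere ne cont] by blast
  let ?c = "x0 \<bullet> (A *v x0)"
  have "x0 \<noteq> 0" using x0 by auto
  then have "?c > 0" using assms unfolding pos_def_def by blast
  moreover have "?c * (norm x)\<^sup>2 \<le> x \<bullet> (A *v x)" for x
  proof (cases "x = 0")
    case False
    have "?c \<le> (x /\<^sub>R norm x) \<bullet> (A *v (x /\<^sub>R norm x))"
      using False by (intro min) simp
    also have "\<dots> = (x \<bullet> (A *v x)) / (norm x)\<^sup>2"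
      by (simp add: matrix_vector_mult_scaleR power2_eq_square divide_inverse mult_ac)
    finally show ?thesis using False by (simp add: field_simps)
  qed simp
  ultimately show ?thesis using that by blast
qed

lemma pos_def_of_quadratic_lower_bound:
  fixes A :: "real^'n^'n"
  assumes "transpose A = A" "c > 0" "\<And>x. c * (norm x)\<^sup>2 \<le> x \<bullet> (A *v x)"
  shows "pos_def A"
  unfolding pos_def_def using assms by (metis less_le_trans mult_pos_pos zero_less_norm_iff zero_less_power)

lemma quadratic_lower_bound_perturb:
  fixes A B :: "real^'n^'n"
  assumes "\<And>x. c * (norm x)\<^sup>2 \<le> x \<bullet> (A *v x)" "norm (B - A) \<le> e"
  shows "(c - e) * (norm x)\<^sup>2 \<le> x \<bullet> (B *v x)"
proof -
  have "x \<bullet> (B *v x) = x \<bullet> (A *v x) + x \<bullet> ((B - A) *v x)"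
    by (simp add: matrix_vector_mult_diff_left inner_diff_right)
  moreover have "- (x \<bullet> ((B - A) *v x)) \<le> e * (norm x)\<^sup>2"
    using abs_quadratic_form_le[of x "B - A"] assms(2)
    by (meson abs_le_D2 mult_right_mono order_trans zero_le_power2)
  ultimately show ?thesis using assms(1)[of x] by (simp add: left_diff_distrib)
qed

lemma psd_mult_eq_0_if_quadratic_form_eq_0:
  fixes A :: "real^'n^'n"
  assumes sym: "transpose A = A" and psd: "\<And>y. y \<bullet> (A *v y) \<ge> 0"
    and zero: "x \<bullet> (A *v x) = 0"
  shows "A *v x = 0"
proof -
  \<comment> \<open>the quadratic form along the line through x in direction y = A x is
      2 t |y|^2 + t^2 (y \<bullet> A y), negative for small t < 0 unless y = 0\<close>
  define y where "y = A *v x"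
  define t where "t = - (y \<bullet> y) / (y \<bullet> (A *v y) + 1)"
  have t_nonpos: "t \<le> 0" and ty: "t * (y \<bullet> (A *v y)) \<ge> - (y \<bullet> y)"
    using psd[of y] unfolding t_def by (auto simp: field_simps)
  have "(x + t *\<^sub>R y) \<bullet> (A *v (x + t *\<^sub>R y)) = t * (2 * (y \<bullet> y) + t * (y \<bullet> (A *v y)))"
    using inner_matrix_vector_mult_commute[OF sym, of y x] zero
    by (simp add: algebra_simps inner_commute[of x] y_def)
  moreover have "t * (2 * (y \<bullet> y) + t * (y \<bullet> (A *v y))) \<le> t * (y \<bullet> y)"
    using t_nonpos ty by (intro mult_left_mono_neg) auto
  ultimately have "t * (y \<bullet> y) \<ge> 0" using psd[of "x + t *\<^sub>R y"] by linarith
  moreover have "y \<noteq> 0 \<Longrightarrow> t < 0"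
    using psd[of y] unfolding t_def by simp
  ultimately show ?thesis
    by (metis inner_gt_zero_iff mult_neg_pos not_less y_def)
qed

lemma pos_def_matrix_inv:
  fixes A :: "real^'n^'n"
  assumes "pos_def A"
  shows "A ** matrix_inv A = mat 1" "matrix_inv A ** A = mat 1"
proof -
  have "inj ((*v) A)"
    using assms unfolding pos_def_def
    by (metis inner_zero_right less_irrefl linear_injective_0 matrix_vector_mul_linear)
  then have "\<exists>A'. A ** A' = mat 1 \<and> A' ** A = mat 1"
    using matrix_left_invertible_injective invertible_left_inverse invertible_def by blast
  then have "A ** matrix_inv A = mat 1 \<and> matrix_inv A ** A = mat 1"
    unfolding matrix_inv_def by (rule someI_ex)
  then show "A ** matrix_inv A = mat 1" "matrix_inv A ** A = mat 1" by auto
qed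

lemma pos_def_transpose_matrix_inv:
  fixes A :: "real^'n^'n"
  assumes "pos_def A"
  shows "transpose (matrix_inv A) = matrix_inv A"
proof -
  have left: "transpose (matrix_inv A) ** A = mat 1"
    using pos_def_matrix_inv(1)[OF assms] assms unfolding pos_def_def
    by (metis matrix_transpose_mul transpose_mat)
  have "transpose (matrix_inv A) = transpose (matrix_inv A) ** (A ** matrix_inv A)"
    using pos_def_matrix_inv(1)[OF assms] by simp
  also have "\<dots> = matrix_inv A" using left by (simp add: matrix_mul_assoc)
  finally show ?thesis .
qed

lemma pos_def_matrix_inv_psd:
  fixes A :: "real^'n^'n"
  assumes "pos_def A"
  shows "y \<bullet> (matrix_inv A *v y) \<ge> 0"
proof -
  let ?w = "matrix_inv A *v y"
  have "A *v ?w = y" using pos_def_matrix_inv(1)[OF assms] by (simp add: matrix_vector_mul_assoc)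
  then have "y \<bullet> ?w = ?w \<bullet> (A *v ?w)" by (simp add: inner_commute)
  also have "\<dots> \<ge> 0" using assms unfolding pos_def_def by (cases "?w = 0") (auto intro: less_imp_le)
  finally show ?thesis .
qed

lemma norm_right_inverse_le:
  fixes A B :: "real^'n^'n"
  assumes c: "c > 0" and lower: "\<And>x. c * (norm x)\<^sup>2 \<le> x \<bullet> (A *v x)" and AB: "A ** B = mat 1"
  shows "norm B \<le> real CARD('n) * real CARD('n) * (1 / c)"
proof (rule norm_matrix_le_of_operator_bound)
  fix y
  let ?z = "B *v y"
  have "c * (norm ?z)\<^sup>2 \<le> ?z \<bullet> y"
    using lower[of ?z] AB by (simp add: matrix_vector_mul_assoc)
  also have "\<dots> \<le> norm ?z * norm y" by (rule norm_cauchy_schwarz)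
  finally have "c * norm ?z \<le> norm y"
    by (cases "?z = 0") (auto simp: power2_eq_square mult.assoc)
  then show "norm ?z \<le> 1 / c * norm y" using c by (simp add: field_simps)
qed

section \<open>Scalar estimates\<close>

lemma two_mult_le_weighted_squares:
  fixes x y k :: real
  assumes "k > 0"
  shows "2 * x * y \<le> k * x\<^sup>2 + y\<^sup>2 / k"
proof -
  have "0 \<le> (k * x - y)\<^sup>2 / k" using assms by simp
  also have "\<dots> = k * x\<^sup>2 + y\<^sup>2 / k - 2 * x * y"
    using assms by (simp add: power2_eq_square field_simps)
  finally show ?thesis by simp
qed

lemma mult_le_by_ratio_bound:
  fixes r x y k c :: real
  assumes "0 < c" "0 \<le> r" "r \<le> k / c" "0 \<le> x" "x \<le> c * y"
  shows "r * x \<le> k * y"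
proof -
  have "r * x \<le> k / c * x" using assms by (intro mult_right_mono) auto
  also have "\<dots> \<le> k / c * (c * y)" using assms by (intro mult_left_mono) auto
  finally show ?thesis using \<open>0 < c\<close> by simp
qed

lemma nonpos_if_deriv_nonpos_where_pos:
  fixes z z' :: "real \<Rightarrow> real"
  assumes "a \<le> b"
    and der: "\<And>t. a \<le> t \<Longrightarrow> t \<le> b \<Longrightarrow> (z has_real_derivative z' t) (at t within {a..b})"
    and deriv_nonpos: "\<And>t. a \<le> t \<Longrightarrow> t \<le> b \<Longrightarrow> z t > 0 \<Longrightarrow> z' t \<le> 0"
    and "z a \<le> 0"
  shows "z b \<le> 0"
proof (rule ccontr)
  assume "\<not> z b \<le> 0"
  \<comment> \<open>t0 is the last time in [a, b] at which z is nonpositive\<close>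
  define S where "S = {a..b} \<inter> z -` {..0}"
  have "continuous_on {a..b} z"
    unfolding continuous_on_eq_continuous_within using DERIV_continuous[OF der] by auto
  then have "closed S" unfolding S_def by (rule continuous_closed_preimage) auto
  moreover have "a \<in> S" "bdd_above S" using \<open>a \<le> b\<close> \<open>z a \<le> 0\<close> by (auto simp: S_def)
  ultimately have t0: "Sup S \<in> S" using closed_contains_Sup by blast
  define t0 where "t0 = Sup S"
  have "a \<le> t0" "t0 \<le> b" "z t0 \<le> 0" using t0 by (auto simp: S_def t0_def)
  with \<open>\<not> z b \<le> 0\<close> have "t0 < b" by (metis order.not_eq_order_implies_strict)
  have pos: "z t > 0" if "t0 < t" "t \<le> b" for t
  proof (rule ccontr)
    assume "\<not> z t > 0"
    then have "t \<in> S" using that \<open>a \<le> t0\<close> by (simp add: S_def)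
    then have "t \<le> t0" unfolding t0_def using \<open>bdd_above S\<close> by (rule cSup_upper)
    then show False using that by simp
  qed
  have der': "(z has_derivative (\<lambda>h. z' x * h)) (at x within {t0..b})" if "t0 \<le> x" "x \<le> b" for x
    using DERIV_subset[OF der[of x]] that \<open>a \<le> t0\<close> unfolding has_field_derivative_def by auto
  obtain x where x: "t0 < x" "x < b" and mvt: "z b - z t0 = z' x * (b - t0)"
    using mvt_simple[OF \<open>t0 < b\<close> der'] by auto
  have "z' x * (b - t0) \<le> 0"
    using deriv_nonpos[of x] pos[of x] x \<open>a \<le> t0\<close> by (intro mult_nonpos_nonneg) auto
  then show False using mvt \<open>z t0 \<le> 0\<close> \<open>\<not> z b \<le> 0\<close> by linarith
qed

lemma nonpos_if_deriv_le_linear_where_pos: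
  fixes z z' :: "real \<Rightarrow> real"
  assumes "a \<le> b"
    and der: "\<And>t. a \<le> t \<Longrightarrow> t \<le> b \<Longrightarrow> (z has_real_derivative z' t) (at t within {a..b})"
    and deriv_le: "\<And>t. a \<le> t \<Longrightarrow> t \<le> b \<Longrightarrow> z t > 0 \<Longrightarrow> z' t \<le> L * z t"
    and "z a \<le> 0"
  shows "z b \<le> 0"
proof -
  have "exp (- L * b) * z b \<le> 0"
  proof (rule nonpos_if_deriv_nonpos_where_pos[OF \<open>a \<le> b\<close>])
    fix t assume t: "a \<le> t" "t \<le> b"
    show "((\<lambda>t. exp (- L * t) * z t) has_real_derivative exp (- L * t) * (z' t - L * z t))
        (at t within {a..b})"
      using der[OF t] by (auto intro!: derivative_eq_intros simp: algebra_simps)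
    show "exp (- L * t) * (z' t - L * z t) \<le> 0" if "exp (- L * t) * z t > 0"
    proof -
      have "z t > 0" using that by (simp add: zero_less_mult_iff)
      then show ?thesis using deriv_le[OF t] by (intro mult_nonneg_nonpos) auto
    qed
  qed (use \<open>z a \<le> 0\<close> in \<open>simp add: mult_nonneg_nonpos\<close>)
  then show ?thesis by (simp add: mult_le_0_iff)
qed

lemma le_if_deriv_le_where_greater:
  fixes y y' B B' :: "real \<Rightarrow> real"
  assumes dy: "\<And>t. a \<le> t \<Longrightarrow> (y has_real_derivative y' t) (at t within {a..})"
    and dB: "\<And>t. a \<le> t \<Longrightarrow> (B has_real_derivative B' t) (at t within {a..})"
    and deriv_le: "\<And>t. a \<le> t \<Longrightarrow> y t > B t \<Longrightarrow> y' t \<le> B' t"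
    and "y a \<le> B a" "a \<le> t"
  shows "y t \<le> B t"
proof -
  have "y t - B t \<le> 0"
  proof (rule nonpos_if_deriv_nonpos_where_pos[OF \<open>a \<le> t\<close>])
    fix s assume "a \<le> s" "s \<le> t"
    then show "((\<lambda>s. y s - B s) has_real_derivative y' s - B' s) (at s within {a..t})"
      using DERIV_subset[OF dy[of s]] DERIV_subset[OF dB[of s]] by (auto intro!: derivative_eq_intros)
  qed (use deriv_le \<open>y a \<le> B a\<close> in auto)
  then show ?thesis by simp
qed

text \<open>Comparison with the solution c e^{-\<mu>(t-T)} + D/l of the linear equation; the
  condition on A says that the forcing A e^{-\<mu>(t-T)} is absorbed by the gap l - \<mu> in the rates.\<close>

lemma deriv_le_linear_imp_le_exp_decay:
  fixes y y' :: "real \<Rightarrow> real"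
  assumes "l > 0"
    and der: "\<And>t. T \<le> t \<Longrightarrow> (y has_real_derivative y' t) (at t within {T..})"
    and deriv_le: "\<And>t. T \<le> t \<Longrightarrow> y' t \<le> - l * y t + A * exp (- \<mu> * (t - T)) + D"
    and "A \<le> (l - \<mu>) * c" "y T \<le> c + D / l" "T \<le> t"
  shows "y t \<le> c * exp (- \<mu> * (t - T)) + D / l"
proof (rule le_if_deriv_le_where_greater[OF der _ _ _ \<open>T \<le> t\<close>])
  fix s
  show "((\<lambda>s. c * exp (- \<mu> * (s - T)) + D / l) has_real_derivative - \<mu> * c * exp (- \<mu> * (s - T)))
      (at s within {T..})"
    by (auto intro!: derivative_eq_intros)
  assume s: "T \<le> s" "y s > c * exp (- \<mu> * (s - T)) + D / l"
  have "y' s \<le> - l * y s + A * exp (- \<mu> * (s - T)) + D" using deriv_le[OF s(1)] .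
  also have "\<dots> < - l * (c * exp (- \<mu> * (s - T)) + D / l) + A * exp (- \<mu> * (s - T)) + D"
    using mult_strict_left_mono[OF s(2) \<open>l > 0\<close>] by simp
  also have "\<dots> = (A - l * c) * exp (- \<mu> * (s - T))"
    using \<open>l > 0\<close> by (simp add: field_simps)
  also have "\<dots> \<le> - \<mu> * c * exp (- \<mu> * (s - T))"
    using \<open>A \<le> (l - \<mu>) * c\<close> by (intro mult_right_mono) (auto simp: algebra_simps)
  finally show "y' s \<le> - \<mu> * c * exp (- \<mu> * (s - T))" by simp
next
  show "y T \<le> c * exp (- \<mu> * (T - T)) + D / l" using \<open>y T \<le> c + D / l\<close> by simp
qed

lemma sqrt_exp: "sqrt (exp x) = exp (x / 2)"
proof -
  have "exp x = (exp (x / 2))\<^sup>2" by (simp add: power2_eq_square flip: exp_add)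
  then show ?thesis by simp
qed

lemma exp_decay_bound_extend_to_0:
  fixes e :: "real \<Rightarrow> real"
  assumes "continuous_on {0..T} e" "\<alpha> \<ge> 0" "r \<ge> 0"
    and late: "\<And>t. T \<le> t \<Longrightarrow> e t \<le> c * exp (- \<alpha> * (t - T)) + r"
  obtains c0 where "\<And>t. t \<ge> 0 \<Longrightarrow> e t \<le> c0 * exp (- \<alpha> * t) + r"
proof -
  obtain E where E: "\<And>t. t \<in> {0..T} \<Longrightarrow> e t \<le> E"
    using compact_imp_bounded[OF compact_continuous_image[OF assms(1) compact_Icc]]
    unfolding bounded_iff by (metis abs_le_D1 image_eqI real_norm_def)
  define c0 where "c0 = (max E 0 + max c 0) * exp (\<alpha> * T)"
  have shift: "x * exp (- \<alpha> * (t - T)) = x * exp (\<alpha> * T) * exp (- \<alpha> * t)" for x t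
    by (simp add: exp_add[symmetric] algebra_simps)
  have "e t \<le> c0 * exp (- \<alpha> * t) + r" if "t \<ge> 0" for t
  proof (cases "T \<le> t")
    case True
    have "c * exp (- \<alpha> * (t - T)) \<le> c0 * exp (- \<alpha> * t)"
      unfolding shift c0_def by (intro mult_right_mono) auto
    then show ?thesis using late[OF True] by simp
  next
    case False
    have "e t \<le> max E 0 * 1" using E[of t] that False by simp
    also have "\<dots> \<le> max E 0 * exp (- \<alpha> * (t - T))"
      using False \<open>\<alpha> \<ge> 0\<close> by (intro mult_left_mono) (auto simp: mult_nonneg_nonpos)
    also have "\<dots> \<le> c0 * exp (- \<alpha> * t)"
      unfolding shift c0_def by (intro mult_right_mono) auto
    finally show ?thesis using \<open>r \<ge> 0\<close> by simp
  qed
  then show ?thesis using that by blast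
qed

lemma exp_decay_bound_imp_ereal_bounds:
  fixes e \<beta> :: "real \<Rightarrow> real"
  assumes "\<alpha> > 0"
    and bound: "\<And>r. (\<And>t. t \<ge> 0 \<Longrightarrow> \<beta> t \<le> r) \<Longrightarrow> \<exists>c0. \<forall>t\<ge>0. e t \<le> c0 * exp (- \<alpha> * t) + r"
  defines "\<rho> \<equiv> SUP t\<in>{0..}. ereal (\<beta> t)"
  shows "(\<exists>c0. \<forall>t\<ge>0. ereal (e t) \<le> ereal (c0 * exp (- \<alpha> * t)) + \<rho>)
    \<and> Limsup at_top (\<lambda>t. ereal (e t)) \<le> \<rho>"
proof -
  have \<beta>_le: "ereal (\<beta> t) \<le> \<rho>" if "t \<ge> 0" for t
    unfolding \<rho>_def using that by (intro SUP_upper) auto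
  show ?thesis
  proof (cases \<rho>)
    case (real r)
    then obtain c0 where c0: "\<And>t. t \<ge> 0 \<Longrightarrow> e t \<le> c0 * exp (- \<alpha> * t) + r"
      using bound[of r] \<beta>_le by force
    have "filterlim (\<lambda>t. - \<alpha> * t) at_bot at_top"
      using \<open>\<alpha> > 0\<close> by (intro filterlim_tendsto_neg_mult_at_bot[OF tendsto_const _ filterlim_ident]) auto
    then have "((\<lambda>t. exp (- \<alpha> * t)) \<longlongrightarrow> 0) at_top"
      by (rule filterlim_compose[OF exp_at_bot])
    then have "((\<lambda>t. ereal (c0 * exp (- \<alpha> * t) + r)) \<longlongrightarrow> ereal (c0 * 0 + r)) at_top"
      by (intro tendsto_ereal tendsto_add tendsto_mult tendsto_const)
    then have "Limsup at_top (\<lambda>t. ereal (c0 * exp (- \<alpha> * t) + r)) = ereal r"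
      by (intro lim_imp_Limsup) auto
    moreover have "Limsup at_top (\<lambda>t. ereal (e t)) \<le> Limsup at_top (\<lambda>t. ereal (c0 * exp (- \<alpha> * t) + r))"
      using c0 by (intro Limsup_mono eventually_mono[OF eventually_ge_at_top[of 0]]) auto
    ultimately show ?thesis using c0 real by auto
  next
    case PInf
    then show ?thesis by simp
  next
    case MInf
    then show ?thesis using \<beta>_le[of 0] by simp
  qed
qed

section \<open>Derivatives of matrix-valued functions\<close>

lemma has_vector_derivative_matrix_vector_mult:
  fixes A :: "real \<Rightarrow> real^'m^'n"
  assumes "(A has_vector_derivative A') (at t within S)" "(v has_vector_derivative v') (at t within S)"
  shows "((\<lambda>s. A s *v v s) has_vector_derivative A t *v v' + A' *v v t) (at t within S)"
  using bounded_bilinear.has_vector_derivative[OF bounded_bilinear_matrix_vector_mult assms] by simp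

lemma has_real_derivative_inner:
  fixes u w :: "real \<Rightarrow> 'a::real_inner"
  assumes "(u has_vector_derivative u') (at t within S)" "(w has_vector_derivative w') (at t within S)"
  shows "((\<lambda>s. u s \<bullet> w s) has_real_derivative u t \<bullet> w' + u' \<bullet> w t) (at t within S)"
  using bounded_bilinear.has_vector_derivative[OF bounded_bilinear_inner assms]
  by (simp add: has_real_derivative_iff_has_vector_derivative)

lemma has_real_derivative_quadratic_form:
  fixes P :: "real \<Rightarrow> real^'n^'n"
  assumes "(P has_vector_derivative P') (at t within S)"
  shows "((\<lambda>s. x \<bullet> (P s *v x)) has_real_derivative x \<bullet> (P' *v x)) (at t within S)"
  using has_real_derivative_inner[OF has_vector_derivative_const
      has_vector_derivative_matrix_vector_mult[OF assms has_vector_derivative_const]] by simp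

lemma has_real_derivative_symmetric_quadratic_form:
  fixes A :: "real \<Rightarrow> real^'n^'n"
  assumes "(x has_vector_derivative x') (at t within S)" "(A has_vector_derivative A') (at t within S)"
    and "transpose (A t) = A t"
  shows "((\<lambda>s. x s \<bullet> (A s *v x s)) has_real_derivative 2 * (x t \<bullet> (A t *v x')) + x t \<bullet> (A' *v x t))
    (at t within S)"
proof -
  have "x' \<bullet> (A t *v x t) = x t \<bullet> (A t *v x')"
    by (rule inner_matrix_vector_mult_commute[OF assms(3)])
  then show ?thesis
    using has_real_derivative_inner[OF assms(1) has_vector_derivative_matrix_vector_mult[OF assms(2,1)]]
    by (simp add: inner_add_right)
qed

lemma has_vector_derivative_iff_difference_quotient:
  fixes f :: "real \<Rightarrow> 'a::real_normed_vector"
  shows "(f has_vector_derivative f') (at t within S) \<longleftrightarrow>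
    ((\<lambda>s. (f s - f t) /\<^sub>R (s - t)) \<longlongrightarrow> f') (at t within S)"
proof -
  have "norm (f s - f t - (s - t) *\<^sub>R f') / norm (s - t) = norm ((f s - f t) /\<^sub>R (s - t) - f')"
    if "s \<noteq> t" for s
  proof -
    have "(f s - f t) /\<^sub>R (s - t) - f' = (f s - f t - (s - t) *\<^sub>R f') /\<^sub>R (s - t)"
      using that by (simp add: scaleR_diff_right)
    then show ?thesis by (simp add: divide_inverse mult.commute)
  qed
  then have "((\<lambda>s. norm (f s - f t - (s - t) *\<^sub>R f') / norm (s - t)) \<longlongrightarrow> 0) (at t within S)
      \<longleftrightarrow> ((\<lambda>s. norm ((f s - f t) /\<^sub>R (s - t) - f')) \<longlongrightarrow> 0) (at t within S)"
    by (intro tendsto_cong) (auto simp: eventually_at_filter)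
  then show ?thesis
    by (simp add: has_vector_derivative_def has_derivative_iff_norm bounded_linear_scaleR_left
        tendsto_norm_zero_iff LIM_zero_iff)
qed

lemma pos_def_eventually:
  fixes P :: "'a \<Rightarrow> real^'n^'n"
  assumes "(P \<longlongrightarrow> L) F" "\<forall>\<^sub>F s in F. transpose (P s) = P s" "pos_def L"
  shows "\<forall>\<^sub>F s in F. pos_def (P s)"
proof -
  obtain c where c: "c > 0" "\<And>x. c * (norm x)\<^sup>2 \<le> x \<bullet> (L *v x)"
    using pos_def_quadratic_lower_bound[OF assms(3)] by blast
  have "\<forall>\<^sub>F s in F. dist (P s) L < c / 2"
    using assms(1) c(1) by (intro tendstoD) auto
  then show ?thesis
    using assms(2)
  proof eventually_elim
    case (elim s)
    have "(c - c / 2) * (norm x)\<^sup>2 \<le> x \<bullet> (P s *v x)" for x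
      using elim(1) by (intro quadratic_lower_bound_perturb[OF c(2)]) (simp add: dist_norm)
    then show ?case
      using pos_def_of_quadratic_lower_bound[OF elim(2), of "c / 2"] c(1) by simp
  qed
qed

lemma pos_def_matrix_inv_diff:
  fixes A B :: "real^'n^'n"
  assumes "pos_def A" "pos_def B"
  shows "matrix_inv A - matrix_inv B = - (matrix_inv A ** (A - B) ** matrix_inv B)"
proof -
  have "matrix_inv A ** (A - B) ** matrix_inv B
      = (matrix_inv A ** A) ** matrix_inv B - matrix_inv A ** (B ** matrix_inv B)"
    by (simp add: matrix_mult_diff_left matrix_mult_diff_right matrix_mul_assoc)
  also have "\<dots> = matrix_inv B - matrix_inv A"
    using pos_def_matrix_inv[OF assms(1)] pos_def_matrix_inv[OF assms(2)] by simp
  finally show ?thesis by simp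
qed

lemma tendsto_matrix_inv:
  fixes P :: "'a \<Rightarrow> real^'n^'n"
  assumes lim: "(P \<longlongrightarrow> L) F" and pd: "\<forall>\<^sub>F s in F. pos_def (P s)" and "pos_def L"
  shows "((\<lambda>s. matrix_inv (P s)) \<longlongrightarrow> matrix_inv L) F"
proof -
  obtain c where c: "c > 0" "\<And>x. c * (norm x)\<^sup>2 \<le> x \<bullet> (L *v x)"
    using pos_def_quadratic_lower_bound[OF \<open>pos_def L\<close>] by blast
  define K where "K = real CARD('n) * real CARD('n) * (1 / (c / 2))"
  have "\<forall>\<^sub>F s in F. dist (P s) L < c / 2"
    using lim c(1) by (intro tendstoD) auto
  then have "\<forall>\<^sub>F s in F. norm (matrix_inv (P s) - matrix_inv L) \<le> K * norm (P s - L) * norm (matrix_inv L)"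
    using pd
  proof eventually_elim
    case (elim s)
    have "(c - c / 2) * (norm x)\<^sup>2 \<le> x \<bullet> (P s *v x)" for x
      using elim(1) by (intro quadratic_lower_bound_perturb[OF c(2)]) (simp add: dist_norm)
    then have "norm (matrix_inv (P s)) \<le> K"
      using norm_right_inverse_le[of "c / 2" "P s"] pos_def_matrix_inv(1)[OF elim(2)] c(1) by (simp add: K_def)
    have "norm (matrix_inv (P s) - matrix_inv L) = norm (matrix_inv (P s) ** (P s - L) ** matrix_inv L)"
      by (simp add: pos_def_matrix_inv_diff[OF elim(2) \<open>pos_def L\<close>])
    also have "\<dots> \<le> norm (matrix_inv (P s)) * norm (P s - L) * norm (matrix_inv L)"
      by (rule norm_matrix_mult3_le)
    also have "\<dots> \<le> K * norm (P s - L) * norm (matrix_inv L)"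
      using \<open>norm (matrix_inv (P s)) \<le> K\<close> by (intro mult_right_mono) auto
    finally show ?case .
  qed
  moreover have "((\<lambda>s. K * norm (P s - L) * norm (matrix_inv L)) \<longlongrightarrow> K * norm (L - L) * norm (matrix_inv L)) F"
    using lim by (intro tendsto_intros)
  then have "((\<lambda>s. K * norm (P s - L) * norm (matrix_inv L)) \<longlongrightarrow> 0) F" by simp
  ultimately have "((\<lambda>s. matrix_inv (P s) - matrix_inv L) \<longlongrightarrow> 0) F"
    by (rule Lim_null_comparison)
  then show ?thesis by (rule LIM_zero_cancel)
qed

lemma has_vector_derivative_matrix_inv:
  fixes P :: "real \<Rightarrow> real^'n^'n"
  assumes der: "(P has_vector_derivative P') (at t within S)"
    and pd: "\<And>s. s \<in> S \<Longrightarrow> pos_def (P s)" and "t \<in> S"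
  shows "((\<lambda>s. matrix_inv (P s)) has_vector_derivative - (matrix_inv (P t) ** P' ** matrix_inv (P t)))
    (at t within S)"
proof -
  define W where "W s = matrix_inv (P s)" for s
  have pd_near: "\<forall>\<^sub>F s in at t within S. pos_def (P s)"
    using pd by (auto simp: eventually_at_filter intro!: always_eventually)
  have "(P \<longlongrightarrow> P t) (at t within S)"
    using has_vector_derivative_continuous[OF der] by (simp add: continuous_within)
  then have W_lim: "(W \<longlongrightarrow> W t) (at t within S)"
    unfolding W_def using pd_near pd[OF \<open>t \<in> S\<close>] by (rule tendsto_matrix_inv)
  have quotient: "((\<lambda>s. (P s - P t) /\<^sub>R (s - t)) \<longlongrightarrow> P') (at t within S)"
    using der by (simp add: has_vector_derivative_iff_difference_quotient)
  have "((\<lambda>s. - (W s ** ((P s - P t) /\<^sub>R (s - t)) ** W t)) \<longlongrightarrow> - (W t ** P' ** W t))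
      (at t within S)"
    by (intro tendsto_minus bounded_bilinear.tendsto[OF bounded_bilinear_matrix_mult]
        W_lim quotient tendsto_const)
  moreover have "\<forall>\<^sub>F s in at t within S.
      - (W s ** ((P s - P t) /\<^sub>R (s - t)) ** W t) = (W s - W t) /\<^sub>R (s - t)"
    using pd_near by eventually_elim
      (simp add: W_def pos_def_matrix_inv_diff[OF _ pd[OF \<open>t \<in> S\<close>]]
        bounded_bilinear.scaleR_right[OF bounded_bilinear_matrix_mult]
        bounded_bilinear.scaleR_left[OF bounded_bilinear_matrix_mult])
  ultimately have "((\<lambda>s. (W s - W t) /\<^sub>R (s - t)) \<longlongrightarrow> - (W t ** P' ** W t)) (at t within S)"
    by (rule Lim_transform_eventually)
  then show ?thesis by (simp add: has_vector_derivative_iff_difference_quotient W_def)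
qed

section \<open>The Riccati equation\<close>

locale riccati_flow =
  fixes P P1 A :: "real \<Rightarrow> real^'h^'h" and Q :: "real^'h^'h" and lam :: real
  assumes has_deriv: "\<And>t. t \<ge> 0 \<Longrightarrow> (P has_vector_derivative P1 t) (at t within {0..})"
    and equation: "\<And>t. t \<ge> 0 \<Longrightarrow> P1 t = (- 2 * lam) *\<^sub>R P t + Q - P t ** A t ** P t"
    and A_sym: "\<And>t. transpose (A t) = A t"
    and A_psd: "\<And>t x. 0 \<le> x \<bullet> (A t *v x)"
    and A_bounded: "bounded (range A)"
    and Q_pd: "pos_def Q"
    and P0_pd: "pos_def (P 0)"
begin

lemma continuous_on_P: "continuous_on {0..} P"
  unfolding continuous_on_eq_continuous_within
  using has_vector_derivative_continuous[OF has_deriv] by auto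

lemma antisymmetric_part_equation:
  assumes "0 \<le> s"
  shows "P1 s - transpose (P1 s) = (- 2 * lam) *\<^sub>R (P s - transpose (P s))
    - (P s ** A s ** (P s - transpose (P s)) + (P s - transpose (P s)) ** A s ** transpose (P s))"
proof -
  have "transpose (P1 s) = transpose ((- 2 * lam) *\<^sub>R P s + Q - P s ** A s ** P s)"
    using equation[OF assms] by simp
  also have "\<dots> = (- 2 * lam) *\<^sub>R transpose (P s) + Q - transpose (P s) ** A s ** transpose (P s)"
    using Q_pd A_sym[of s] unfolding pos_def_def
    by (simp add: transpose_add transpose_diff transpose_scalar matrix_transpose_mul matrix_mul_assoc)
  finally have transpose_P1: "transpose (P1 s) = \<dots>" .
  have "P1 s - transpose (P1 s) = ((- 2 * lam) *\<^sub>R P s + Q - P s ** A s ** P s)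
      - ((- 2 * lam) *\<^sub>R transpose (P s) + Q - transpose (P s) ** A s ** transpose (P s))"
    unfolding transpose_P1 using equation[OF assms] by simp
  also have "\<dots> = (- 2 * lam) *\<^sub>R (P s - transpose (P s))
      - (P s ** A s ** P s - transpose (P s) ** A s ** transpose (P s))"
    by (simp add: scaleR_diff_right algebra_simps)
  also have "P s ** A s ** P s - transpose (P s) ** A s ** transpose (P s)
      = P s ** A s ** (P s - transpose (P s)) + (P s - transpose (P s)) ** A s ** transpose (P s)"
    by (simp add: matrix_mult_diff_left matrix_mult_diff_right)
  finally show ?thesis .
qed

text \<open>Uniqueness for the linear equation satisfied by the antisymmetric part P - transpose P, which
  vanishes at time 0, via Gronwall's inequality for its squared norm.\<close>

lemma symmetric:
  assumes "t \<ge> 0"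
  shows "transpose (P t) = P t"
proof -
  define E where "E s = P s - transpose (P s)" for s
  define E' where "E' s = P1 s - transpose (P1 s)" for s
  obtain a where "\<forall>X\<in>range A. norm X \<le> a"
    using A_bounded unfolding bounded_iff by blast
  then have a: "\<And>s. norm (A s) \<le> a" by blast
  have "bounded (P ` {0..t})"
    by (intro compact_imp_bounded compact_continuous_image compact_Icc
        continuous_on_subset[OF continuous_on_P]) auto
  then obtain b where "\<forall>X\<in>P ` {0..t}. norm X \<le> b"
    unfolding bounded_iff by blast
  then have b: "\<And>s. s \<in> {0..t} \<Longrightarrow> norm (P s) \<le> b" by blast
  have E_deriv: "(E has_vector_derivative E' s) (at s within {0..t})" if "0 \<le> s" "s \<le> t" for s
    unfolding E_def E'_def using that
    by (intro has_vector_derivative_diff bounded_linear.has_vector_derivative[OF bounded_linear_transpose]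
        has_vector_derivative_within_subset[OF has_deriv]) auto
  have "E t \<bullet> E t \<le> 0"
  proof (rule nonpos_if_deriv_le_linear_where_pos[where L = "4 * \<bar>lam\<bar> + 4 * (b * a)", OF \<open>t \<ge> 0\<close>])
    fix s assume s: "0 \<le> s" "s \<le> t"
    then show "((\<lambda>s. E s \<bullet> E s) has_real_derivative 2 * (E s \<bullet> E' s)) (at s within {0..t})"
      using has_real_derivative_inner[OF E_deriv E_deriv] by (simp add: inner_commute)
    show "2 * (E s \<bullet> E' s) \<le> (4 * \<bar>lam\<bar> + 4 * (b * a)) * (E s \<bullet> E s)"
      unfolding E'_def antisymmetric_part_equation[OF s(1)] E_def[symmetric]
      using b[of s] a[of s] s by (intro inner_sylvester_le) auto
  qed (use P0_pd in \<open>simp add: E_def pos_def_def\<close>)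
  then have "E t = 0" by (metis inner_eq_zero_iff inner_ge_zero order_antisym)
  then show ?thesis by (simp add: E_def)
qed

lemma quadratic_form_has_derivative:
  assumes "t \<ge> 0"
  shows "((\<lambda>s. x \<bullet> (P s *v x)) has_real_derivative
    - 2 * lam * (x \<bullet> (P t *v x)) + x \<bullet> (Q *v x) - (P t *v x) \<bullet> (A t *v (P t *v x))) (at t within {0..})"
proof -
  have "x \<bullet> ((P t ** A t ** P t) *v x) = (P t *v x) \<bullet> (A t *v (P t *v x))"
    using inner_matrix_vector_mult_transpose[of x "P t"] symmetric[OF assms]
    by (simp flip: matrix_vector_mul_assoc)
  then show ?thesis
    using has_real_derivative_quadratic_form[OF has_deriv[OF assms], of x] equation[OF assms]
    by (simp add: matrix_vector_mult_add_rdistrib matrix_vector_mult_diff_left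
        matrix_vector_mult_scaleR_left inner_diff_right inner_add_right)
qed

lemma psd_if_pos_def_before:
  assumes "0 < t0" and before: "\<And>s. 0 \<le> s \<Longrightarrow> s < t0 \<Longrightarrow> pos_def (P s)"
  shows "0 \<le> y \<bullet> (P t0 *v y)"
proof (rule continuous_ge_on_closure[where S = "{0..<t0}" and f = "\<lambda>s. y \<bullet> (P s *v y)" and x = t0])
  have "continuous_on {0..t0} P" by (rule continuous_on_subset[OF continuous_on_P]) auto
  then show "continuous_on (closure {0..<t0}) (\<lambda>s. y \<bullet> (P s *v y))"
    using \<open>0 < t0\<close> by (auto intro!: continuous_intros
        bounded_bilinear.continuous_on[OF bounded_bilinear_matrix_vector_mult])
  show "0 \<le> y \<bullet> (P s *v y)" if "s \<in> {0..<t0}" for s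
    using before[of s] that unfolding pos_def_def by (cases "y = 0") (auto intro: less_imp_le)
qed (use \<open>0 < t0\<close> in auto)

text \<open>Along a kernel vector x of P t0 the quadratic form has derivative x \<bullet> Q x > 0 at t0,
  so it was negative just before t0.\<close>

lemma kernel_trivial_if_pos_def_before:
  assumes "0 < t0" and before: "\<And>s. 0 \<le> s \<Longrightarrow> s < t0 \<Longrightarrow> pos_def (P s)" and "P t0 *v x = 0"
  shows "x = 0"
proof (rule ccontr)
  assume "x \<noteq> 0"
  have "((\<lambda>s. x \<bullet> (P s *v x)) has_real_derivative x \<bullet> (Q *v x)) (at t0 within {0..})"
    using quadratic_form_has_derivative[OF less_imp_le[OF \<open>0 < t0\<close>], of x] \<open>P t0 *v x = 0\<close> by simp
  moreover have "x \<bullet> (Q *v x) > 0" using Q_pd \<open>x \<noteq> 0\<close> by (simp add: pos_def_def)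
  ultimately obtain d where "d > 0"
    and dec: "\<And>h. h > 0 \<Longrightarrow> t0 - h \<ge> 0 \<Longrightarrow> h < d \<Longrightarrow> x \<bullet> (P (t0 - h) *v x) < 0"
    using has_real_derivative_pos_inc_left \<open>P t0 *v x = 0\<close> by fastforce
  define h where "h = min d t0 / 2"
  have "h > 0" "t0 - h \<ge> 0" "h < d" using \<open>d > 0\<close> \<open>t0 > 0\<close> by (auto simp: h_def)
  then have "x \<bullet> (P (t0 - h) *v x) < 0" by (rule dec)
  moreover have "pos_def (P (t0 - h))" using before \<open>h > 0\<close> \<open>t0 - h \<ge> 0\<close> by simp
  ultimately show False using \<open>x \<noteq> 0\<close> unfolding pos_def_def by force
qed

lemma pos_def:
  assumes "t \<ge> 0"
  shows "pos_def (P t)"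
proof (rule ccontr)
  assume "\<not> pos_def (P t)"
  \<comment> \<open>t0 is the first time at which P fails to be positive definite\<close>
  define S where "S = {s. 0 \<le> s \<and> \<not> pos_def (P s)}"
  define t0 where "t0 = Inf S"
  have "t \<in> S" "bdd_below S" using \<open>\<not> pos_def (P t)\<close> assms by (auto simp: S_def)
  then have "0 \<le> t0" unfolding t0_def by (intro cInf_greatest) (auto simp: S_def)
  have before: "pos_def (P s)" if "0 \<le> s" "s < t0" for s
  proof (rule ccontr)
    assume "\<not> pos_def (P s)"
    then have "s \<in> S" using that by (simp add: S_def)
    then have "t0 \<le> s" unfolding t0_def using \<open>bdd_below S\<close> by (rule cInf_lower)
    then show False using that by simp
  qed
  have not_pd: "\<not> pos_def (P t0)"
  proof
    assume "pos_def (P t0)"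
    have "(P \<longlongrightarrow> P t0) (at t0 within {0..})"
      using has_vector_derivative_continuous[OF has_deriv[OF \<open>0 \<le> t0\<close>]] by (simp add: continuous_within)
    moreover have "\<forall>\<^sub>F s in at t0 within {0..}. transpose (P s) = P s"
      by (auto simp: eventually_at_filter symmetric intro!: always_eventually)
    ultimately have "\<forall>\<^sub>F s in at t0 within {0..}. pos_def (P s)"
      using \<open>pos_def (P t0)\<close> by (rule pos_def_eventually)
    then obtain d where "d > 0" and near: "\<And>s. s \<ge> 0 \<Longrightarrow> s \<noteq> t0 \<Longrightarrow> dist s t0 < d \<Longrightarrow> pos_def (P s)"
      unfolding eventually_at by auto
    obtain s where "s \<in> S" "s < t0 + d"
      using cInf_less_iff[of S "t0 + d"] \<open>t \<in> S\<close> \<open>bdd_below S\<close> \<open>d > 0\<close> by (auto simp: t0_def)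
    moreover have "t0 \<le> s" using cInf_lower[OF \<open>s \<in> S\<close> \<open>bdd_below S\<close>] by (simp add: t0_def)
    ultimately show False
      using near[of s] \<open>pos_def (P t0)\<close> by (auto simp: S_def dist_real_def)
  qed
  then have "0 < t0" using P0_pd \<open>0 \<le> t0\<close> by (cases "t0 = 0") auto
  note psd = psd_if_pos_def_before[OF this before]
  obtain x where "x \<noteq> 0" "x \<bullet> (P t0 *v x) = 0"
    using not_pd psd symmetric[OF \<open>0 \<le> t0\<close>] unfolding pos_def_def by (meson antisym not_less)
  then have "P t0 *v x = 0"
    using psd symmetric[OF \<open>0 \<le> t0\<close>] by (intro psd_mult_eq_0_if_quadratic_form_eq_0) auto
  then show False
    using kernel_trivial_if_pos_def_before[OF \<open>0 < t0\<close> before] \<open>x \<noteq> 0\<close> by blast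
qed

lemma quadratic_form_le:
  assumes "lam > 0" "t \<ge> 0"
  shows "x \<bullet> (P t *v x) \<le> x \<bullet> (P 0 *v x) * exp (- 2 * lam * t) + x \<bullet> (Q *v x) / (2 * lam)"
proof -
  have "x \<bullet> (P t *v x) \<le> x \<bullet> (P 0 *v x) * exp (- (2 * lam) * (t - 0)) + x \<bullet> (Q *v x) / (2 * lam)"
  proof (rule deriv_le_linear_imp_le_exp_decay[where y = "\<lambda>s. x \<bullet> (P s *v x)" and T = 0 and A = 0
        and l = "2 * lam" and \<mu> = "2 * lam" and D = "x \<bullet> (Q *v x)"])
    show "((\<lambda>s. x \<bullet> (P s *v x)) has_real_derivative
      - 2 * lam * (x \<bullet> (P s *v x)) + x \<bullet> (Q *v x) - (P s *v x) \<bullet> (A s *v (P s *v x))) (at s within {0..})"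
      if "0 \<le> s" for s
      using quadratic_form_has_derivative[OF that] .
    have "0 \<le> x \<bullet> (Q *v x)" using Q_pd unfolding pos_def_def by (cases "x = 0") (auto intro: less_imp_le)
    then show "x \<bullet> (P 0 *v x) \<le> x \<bullet> (P 0 *v x) + x \<bullet> (Q *v x) / (2 * lam)"
      using \<open>lam > 0\<close> by simp
  qed (use assms A_psd in auto)
  then show ?thesis by simp
qed

definition warmup_time :: real where
  "warmup_time = ln (norm (P 0) + 1) / (2 * lam)"

lemma warmup_time_nonneg: "lam > 0 \<Longrightarrow> 0 \<le> warmup_time"
  by (simp add: warmup_time_def)

lemma quadratic_form_le_after_warmup:
  assumes "lam > 0" "warmup_time \<le> t"
  shows "x \<bullet> (P t *v x) \<le> (1 + norm Q / (2 * lam)) * (norm x)\<^sup>2"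
proof -
  have "0 \<le> warmup_time" using \<open>lam > 0\<close> by (rule warmup_time_nonneg)
  have "exp (- 2 * lam * t) \<le> exp (- 2 * lam * warmup_time)"
    using assms by simp
  also have "- 2 * lam * warmup_time = - ln (norm (P 0) + 1)"
    using \<open>lam > 0\<close> by (simp add: warmup_time_def)
  finally have "exp (- 2 * lam * t) * (norm (P 0) + 1) \<le> 1"
    by (simp add: exp_minus add_pos_nonneg field_simps)
  then have decayed: "exp (- 2 * lam * t) * norm (P 0) \<le> 1"
    using exp_gt_zero[of "- 2 * lam * t"] unfolding distrib_left by linarith
  have "x \<bullet> (P 0 *v x) * exp (- 2 * lam * t) \<le> norm (P 0) * (norm x)\<^sup>2 * exp (- 2 * lam * t)"
    using abs_quadratic_form_le[of x "P 0"] by (intro mult_right_mono) auto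
  also have "\<dots> = (exp (- 2 * lam * t) * norm (P 0)) * (norm x)\<^sup>2" by simp
  also have "\<dots> \<le> (norm x)\<^sup>2" using decayed by (intro mult_left_le_one_le) auto
  finally have "x \<bullet> (P 0 *v x) * exp (- 2 * lam * t) \<le> (norm x)\<^sup>2" .
  moreover have "x \<bullet> (Q *v x) / (2 * lam) \<le> norm Q * (norm x)\<^sup>2 / (2 * lam)"
    using abs_quadratic_form_le[of x Q] \<open>lam > 0\<close> by (intro divide_right_mono) auto
  moreover have "x \<bullet> (P t *v x) \<le> x \<bullet> (P 0 *v x) * exp (- 2 * lam * t) + x \<bullet> (Q *v x) / (2 * lam)"
    using quadratic_form_le \<open>lam > 0\<close> \<open>0 \<le> warmup_time\<close> assms(2) by simp
  moreover have "(1 + norm Q / (2 * lam)) * (norm x)\<^sup>2 = (norm x)\<^sup>2 + norm Q * (norm x)\<^sup>2 / (2 * lam)"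
    by (simp add: algebra_simps)
  ultimately show ?thesis by linarith
qed

end

section \<open>The closed loop\<close>

lemma psd_cross_term_le:
  fixes R :: "real^'n^'n"
  assumes "transpose R = R" "\<And>y. 0 \<le> y \<bullet> (R *v y)"
  shows "2 * (v \<bullet> (R *v w)) - v \<bullet> (R *v v) \<le> w \<bullet> (R *v w)"
proof -
  have "0 \<le> (v - w) \<bullet> (R *v (v - w))" by (rule assms(2))
  also have "\<dots> = v \<bullet> (R *v v) - 2 * (v \<bullet> (R *v w)) + w \<bullet> (R *v w)"
    using inner_matrix_vector_mult_commute[OF assms(1), of w v]
    by (simp add: matrix_vector_mult_diff_right inner_diff_left inner_diff_right)
  finally show ?thesis by simp
qed

lemma skew_symmetric_quadratic_form_eq_0:
  fixes S :: "real^'n^'n"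
  assumes "skew_symmetric S"
  shows "x \<bullet> (S *v x) = 0"
proof -
  have "x \<bullet> (S *v x) = (transpose S *v x) \<bullet> x" by (rule inner_matrix_vector_mult_transpose)
  also have "\<dots> = - (x \<bullet> (S *v x))"
    using assms by (simp add: skew_symmetric_def inner_commute matrix_vector_mult_minus_left)
  finally show ?thesis by simp
qed

text \<open>The time derivative of the Lyapunov function s \<bullet> M s + z \<bullet> P z (with P z the parameter error),
  evaluated along the closed loop: the Coriolis terms cancel by skew symmetry and the coupling
  terms \<plusminus> s \<bullet> \<Phi> P z cancel between the two parts.\<close>

lemma closed_loop_lyapunov_derivative_eq:
  fixes s sd d eps :: "real^'n" and z ea ea' a a1 :: "real^'h"
    and M Md C K Ri :: "real^'n^'n" and \<Phi> :: "real^'h^'n" and P P1 Q :: "real^'h^'h"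
  assumes sliding: "M *v sd = - (C *v s) - K *v s - \<Phi> *v ea + d"
    and skew: "skew_symmetric (Md - 2 *\<^sub>R C)"
    and P_sym: "transpose P = P" and Pz: "P *v z = ea"
    and adaptation: "ea' = - lam *\<^sub>R (ea + a) - P *v (transpose \<Phi> *v (Ri *v (\<Phi> *v ea - d - eps)))
      + P *v (transpose \<Phi> *v s) - a1"
    and riccati: "P1 = (- 2 * lam) *\<^sub>R P + Q - P ** transpose \<Phi> ** Ri ** \<Phi> ** P"
  shows "2 * (s \<bullet> (M *v sd)) + s \<bullet> (Md *v s) + 2 * (z \<bullet> ea') - z \<bullet> (P1 *v z)
    = - 2 * (s \<bullet> (K *v s)) + 2 * (s \<bullet> d) - 2 * (z \<bullet> (lam *\<^sub>R a + a1))
      + (2 * ((\<Phi> *v ea) \<bullet> (Ri *v (d + eps))) - (\<Phi> *v ea) \<bullet> (Ri *v (\<Phi> *v ea))) - z \<bullet> (Q *v z)"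
proof -
  define v where "v = \<Phi> *v ea"
  have zP: "z \<bullet> (P *v y) = ea \<bullet> y" for y
    using inner_matrix_vector_mult_transpose[of z P y] P_sym Pz by simp
  have ea\<Phi>: "ea \<bullet> (transpose \<Phi> *v y) = v \<bullet> y" for y
    using inner_matrix_vector_mult_transpose[of ea "transpose \<Phi>" y] by (simp add: v_def)
  have "s \<bullet> (Md *v s) = 2 * (s \<bullet> (C *v s))"
  proof -
    have "s \<bullet> ((Md - 2 *\<^sub>R C) *v s) = 0"
      using skew by (rule skew_symmetric_quadratic_form_eq_0)
    then show ?thesis
      by (simp add: matrix_vector_mult_diff_left matrix_vector_mult_scaleR_left inner_diff_right)
  qed
  moreover have "s \<bullet> (M *v sd) = - (s \<bullet> (C *v s)) - s \<bullet> (K *v s) - s \<bullet> v + s \<bullet> d"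
    unfolding sliding v_def by (simp add: inner_diff_right inner_add_right)
  moreover have "z \<bullet> ea' = - lam * (z \<bullet> ea) - lam * (z \<bullet> a) - v \<bullet> (Ri *v (v - (d + eps)))
      + v \<bullet> s - z \<bullet> a1"
    unfolding adaptation
    by (simp add: zP ea\<Phi> v_def inner_diff_right inner_add_right algebra_simps
        del: transpose_matrix_vector)
  moreover have "z \<bullet> (P1 *v z) = - 2 * lam * (z \<bullet> ea) + z \<bullet> (Q *v z) - v \<bullet> (Ri *v v)"
  proof -
    have "(P ** transpose \<Phi> ** Ri ** \<Phi> ** P) *v z = P *v (transpose \<Phi> *v (Ri *v v))"
      using Pz by (simp add: v_def flip: matrix_vector_mul_assoc)
    then show ?thesis unfolding riccati
      by (simp add: zP ea\<Phi> Pz matrix_vector_mult_diff_left matrix_vector_mult_add_rdistrib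
          matrix_vector_mult_scaleR_left inner_diff_right inner_add_right del: transpose_matrix_vector)
  qed
  ultimately show ?thesis
    by (simp add: v_def matrix_vector_mult_diff_right inner_diff_right inner_add_right inner_commute[of s]
        algebra_simps)
qed

lemma closed_loop_lyapunov_derivative_le:
  fixes s d w :: "real^'n" and z b :: "real^'h" and K Ri :: "real^'n^'n" and Q :: "real^'h^'h"
  assumes K: "\<And>x. cK * (norm x)\<^sup>2 \<le> x \<bullet> (K *v x)" "cK > 0"
    and Q: "\<And>x. cQ * (norm x)\<^sup>2 \<le> x \<bullet> (Q *v x)" "cQ > 0"
    and Ri: "transpose Ri = Ri" "\<And>y. 0 \<le> y \<bullet> (Ri *v y)"
    and "norm d \<le> \<beta>" "norm w \<le> \<beta>" "norm b \<le> \<beta>"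
  shows "- 2 * (s \<bullet> (K *v s)) + 2 * (s \<bullet> d) - 2 * (z \<bullet> b) + (2 * (v \<bullet> (Ri *v w)) - v \<bullet> (Ri *v v))
      - z \<bullet> (Q *v z)
    \<le> - cK * (norm s)\<^sup>2 - cQ / 2 * (norm z)\<^sup>2 + (norm Ri + 1 / cK + 2 / cQ) * \<beta>\<^sup>2"
proof -
  have sq: "(norm x)\<^sup>2 \<le> \<beta>\<^sup>2" if "norm x \<le> \<beta>" for x :: "'a::real_normed_vector"
    using that by (intro power_mono) auto
  have "2 * (s \<bullet> d) \<le> cK * (norm s)\<^sup>2 + (norm d)\<^sup>2 / cK"
    using norm_cauchy_schwarz[of s d] two_mult_le_weighted_squares[OF K(2), of "norm s" "norm d"]
    by linarith
  also have "\<dots> \<le> cK * (norm s)\<^sup>2 + \<beta>\<^sup>2 / cK"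
    using sq[OF \<open>norm d \<le> \<beta>\<close>] K(2) by (simp add: divide_right_mono)
  finally have s_part: "- 2 * (s \<bullet> (K *v s)) + 2 * (s \<bullet> d) \<le> - cK * (norm s)\<^sup>2 + \<beta>\<^sup>2 / cK"
    using K(1)[of s] by linarith
  have "- 2 * (z \<bullet> b) \<le> cQ / 2 * (norm z)\<^sup>2 + (norm b)\<^sup>2 / (cQ / 2)"
    using norm_cauchy_schwarz[of "- z" b] two_mult_le_weighted_squares[of "cQ / 2" "norm z" "norm b"] Q(2)
    by simp
  also have "\<dots> \<le> cQ / 2 * (norm z)\<^sup>2 + 2 / cQ * \<beta>\<^sup>2"
    using sq[OF \<open>norm b \<le> \<beta>\<close>] Q(2) by (simp add: field_simps)
  finally have z_part: "- 2 * (z \<bullet> b) - z \<bullet> (Q *v z) \<le> - cQ / 2 * (norm z)\<^sup>2 + 2 / cQ * \<beta>\<^sup>2"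
    using Q(1)[of z] by linarith
  have "2 * (v \<bullet> (Ri *v w)) - v \<bullet> (Ri *v v) \<le> w \<bullet> (Ri *v w)"
    by (rule psd_cross_term_le[OF Ri])
  also have "\<dots> \<le> norm Ri * (norm w)\<^sup>2"
    using abs_quadratic_form_le[of w Ri] by linarith
  also have "\<dots> \<le> norm Ri * \<beta>\<^sup>2"
    using sq[OF \<open>norm w \<le> \<beta>\<close>] by (intro mult_left_mono) auto
  finally have "2 * (v \<bullet> (Ri *v w)) - v \<bullet> (Ri *v v) \<le> norm Ri * \<beta>\<^sup>2" .
  with s_part z_part show ?thesis
    by (simp add: algebra_simps)
qed

locale robot_gains =
  fixes M :: "real^'n \<Rightarrow> real^'n^'n" and DM :: "real^'n \<Rightarrow> real^'n \<Rightarrow> real^'n^'n"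
    and C :: "real^'n \<Rightarrow> real^'n \<Rightarrow> real^'n^'n" and \<phi> :: "real^'n \<Rightarrow> real^'n \<Rightarrow> real^'h^'n"
    and K \<Lambda> R :: "real^'n^'n" and Q :: "real^'h^'h" and lam :: real
    and m1 m2 B cK c\<Lambda> cQ :: real
  assumes M_sym: "\<And>x. transpose (M x) = M x"
    and M_lower: "\<And>x v. m1 * (norm v)\<^sup>2 \<le> v \<bullet> (M x *v v)"
    and M_upper: "\<And>x v. v \<bullet> (M x *v v) \<le> m2 * (norm v)\<^sup>2"
    and m1_pos: "0 < m1" and m1_le_m2: "m1 \<le> m2"
    and M_deriv: "\<And>x. (M has_derivative DM x) (at x)"
    and skew: "\<And>x v. skew_symmetric (DM x v - 2 *\<^sub>R C x v)"
    and \<phi>_bound: "\<And>x xd z. norm (\<phi> x xd *v z) \<le> B * norm z"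
    and K_lower: "\<And>x. cK * (norm x)\<^sup>2 \<le> x \<bullet> (K *v x)" and cK_pos: "0 < cK"
    and \<Lambda>_lower: "\<And>x. c\<Lambda> * (norm x)\<^sup>2 \<le> x \<bullet> (\<Lambda> *v x)" and c\<Lambda>_pos: "0 < c\<Lambda>"
    and Q_pd: "pos_def Q" and Q_lower: "\<And>x. cQ * (norm x)\<^sup>2 \<le> x \<bullet> (Q *v x)" and cQ_pos: "0 < cQ"
    and R_pd: "pos_def R" and lam_pos: "0 < lam"
begin

definition P_bound :: real where
  "P_bound = 1 + norm Q / (2 * lam)"

definition decay_rate :: real where
  "decay_rate = min (cK / m2) (cQ / (2 * P_bound))"

definition noise_gain :: real where
  "noise_gain = norm (matrix_inv R) + 1 / cK + 2 / cQ"

definition error_gain :: real where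
  "error_gain = sqrt (noise_gain / (decay_rate * m1)) / c\<Lambda>"

definition convergence_rate :: real where
  "convergence_rate = min c\<Lambda> decay_rate / 4"

lemma decay_rate_pos: "0 < decay_rate"
proof -
  have "0 < P_bound" using lam_pos by (simp add: P_bound_def add_pos_nonneg)
  then show ?thesis using cK_pos cQ_pos m1_pos m1_le_m2 by (simp add: decay_rate_def)
qed

lemma noise_gain_pos: "0 < noise_gain"
  using cK_pos cQ_pos by (simp add: noise_gain_def add_nonneg_pos)

lemma error_gain_pos: "0 < error_gain"
  using noise_gain_pos decay_rate_pos m1_pos c\<Lambda>_pos by (simp add: error_gain_def)

lemma error_gain_sq: "(error_gain * b)\<^sup>2 = noise_gain * b\<^sup>2 / (decay_rate * m1 * c\<Lambda>\<^sup>2)"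
proof -
  have "(sqrt (noise_gain / (decay_rate * m1)))\<^sup>2 = noise_gain / (decay_rate * m1)"
    using noise_gain_pos decay_rate_pos m1_pos by simp
  then show ?thesis by (simp add: error_gain_def power_mult_distrib power_divide)
qed

lemma convergence_rate_pos: "0 < convergence_rate"
  using decay_rate_pos c\<Lambda>_pos by (simp add: convergence_rate_def)

end

text \<open>The hypotheses of the theorem along one trajectory: ah estimates the weights a, eps is the
  measurement noise, and q1, q2, qd1, qd2, ah1, a1, P1 are the derivatives of q, q1, qd, qd1, ah, a, P.\<close>

locale closed_loop = robot_gains M DM C \<phi> K \<Lambda> R Q lam m1 m2 B cK c\<Lambda> cQ
  for M :: "real^'n \<Rightarrow> real^'n^'n" and DM C and \<phi> :: "real^'n \<Rightarrow> real^'n \<Rightarrow> real^'h^'n"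
    and K \<Lambda> R Q lam m1 m2 B cK c\<Lambda> cQ +
  fixes g :: "real^'n \<Rightarrow> real^'n" and f :: "real^'n \<Rightarrow> real^'n \<Rightarrow> 'w \<Rightarrow> real^'n" and w :: "real \<Rightarrow> 'w"
    and q q1 q2 qd qd1 qd2 u :: "real \<Rightarrow> real^'n" and ah ah1 :: "real \<Rightarrow> real^'h"
    and P P1 :: "real \<Rightarrow> real^'h^'h" and a a1 :: "real \<Rightarrow> real^'h" and eps :: "real \<Rightarrow> real^'n"
  assumes q_deriv: "\<And>t. 0 \<le> t \<Longrightarrow> (q has_vector_derivative q1 t) (at t within {0..})"
    and q1_deriv: "\<And>t. 0 \<le> t \<Longrightarrow> (q1 has_vector_derivative q2 t) (at t within {0..})"
    and qd_deriv: "\<And>t. 0 \<le> t \<Longrightarrow> (qd has_vector_derivative qd1 t) (at t within {0..})"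
    and qd1_deriv: "\<And>t. 0 \<le> t \<Longrightarrow> (qd1 has_vector_derivative qd2 t) (at t within {0..})"
    and ah_deriv: "\<And>t. 0 \<le> t \<Longrightarrow> (ah has_vector_derivative ah1 t) (at t within {0..})"
    and P_deriv: "\<And>t. 0 \<le> t \<Longrightarrow> (P has_vector_derivative P1 t) (at t within {0..})"
    and a_deriv: "\<And>t. 0 \<le> t \<Longrightarrow> (a has_vector_derivative a1 t) (at t within {0..})"
    and P0_pd: "pos_def (P 0)"
    and dynamics: "\<And>t. 0 \<le> t \<Longrightarrow>
      M (q t) *v q2 t + C (q t) (q1 t) *v q1 t + g (q t) = u t + f (q t) (q1 t) (w t)"
    and control: "\<And>t. 0 \<le> t \<Longrightarrow>
      u t = M (q t) *v (qd2 t - \<Lambda> *v (q1 t - qd1 t)) + C (q t) (q1 t) *v (qd1 t - \<Lambda> *v (q t - qd t))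
        + g (q t) - K *v (q1 t - (qd1 t - \<Lambda> *v (q t - qd t))) - \<phi> (q t) (q1 t) *v ah t"
    and adaptation: "\<And>t. 0 \<le> t \<Longrightarrow>
      ah1 t = - lam *\<^sub>R ah t - P t *v (transpose (\<phi> (q t) (q1 t)) *v (matrix_inv R *v
          (\<phi> (q t) (q1 t) *v ah t - (f (q t) (q1 t) (w t) + eps t))))
        + P t *v (transpose (\<phi> (q t) (q1 t)) *v (q1 t - (qd1 t - \<Lambda> *v (q t - qd t))))"
    and riccati: "\<And>t. 0 \<le> t \<Longrightarrow>
      P1 t = (- 2 * lam) *\<^sub>R P t + Q - P t ** transpose (\<phi> (q t) (q1 t)) ** matrix_inv R ** \<phi> (q t) (q1 t) ** P t"
begin

definition regressor :: "real \<Rightarrow> real^'h^'n" where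
  "regressor t = \<phi> (q t) (q1 t)"

definition tracking_error :: "real \<Rightarrow> real^'n" where
  "tracking_error t = q t - qd t"

definition sliding :: "real \<Rightarrow> real^'n" where
  "sliding t = q1 t - qd1 t + \<Lambda> *v tracking_error t"

definition param_error :: "real \<Rightarrow> real^'h" where
  "param_error t = ah t - a t"

definition repr_error :: "real \<Rightarrow> real^'n" where
  "repr_error t = f (q t) (q1 t) (w t) - regressor t *v a t"

definition disturbance :: "real \<Rightarrow> real" where
  "disturbance t = norm (repr_error t) + norm (eps t) + lam * norm (a t) + norm (a1 t)"

definition lyapunov :: "real \<Rightarrow> real" where
  "lyapunov t = sliding t \<bullet> (M (q t) *v sliding t)
    + param_error t \<bullet> (matrix_inv (P t) *v param_error t)"

definition lyapunov_deriv :: "real \<Rightarrow> real" where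
  "lyapunov_deriv t =
    (let s' = q2 t - qd2 t + \<Lambda> *v (q1 t - qd1 t); z = matrix_inv (P t) *v param_error t
     in 2 * (sliding t \<bullet> (M (q t) *v s')) + sliding t \<bullet> (DM (q t) (q1 t) *v sliding t)
       + 2 * (z \<bullet> (ah1 t - a1 t)) - z \<bullet> (P1 t *v z))"

sublocale riccati: riccati_flow P P1 "\<lambda>t. transpose (regressor t) ** matrix_inv R ** regressor t" Q lam
proof
  have Ri_sym: "transpose (matrix_inv R) = matrix_inv R"
    by (rule pos_def_transpose_matrix_inv[OF R_pd])
  show "transpose (transpose (regressor t) ** matrix_inv R ** regressor t)
      = transpose (regressor t) ** matrix_inv R ** regressor t" for t
    by (simp add: matrix_transpose_mul Ri_sym matrix_mul_assoc)
  show "0 \<le> x \<bullet> ((transpose (regressor t) ** matrix_inv R ** regressor t) *v x)" for t x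
    using pos_def_matrix_inv_psd[OF R_pd, of "regressor t *v x"]
      inner_matrix_vector_mult_transpose[of x "transpose (regressor t)"]
    by (simp add: matrix_vector_mul_assoc[symmetric] del: transpose_matrix_vector)
  define b where "b = real CARD('n) * real CARD('h) * B"
  have nb: "norm (regressor t) \<le> b" for t
    unfolding b_def regressor_def by (rule norm_matrix_le_of_operator_bound[OF \<phi>_bound])
  then have "0 \<le> b" by (meson norm_ge_zero order_trans)
  then have "norm (transpose (regressor t)) * norm (matrix_inv R) * norm (regressor t)
      \<le> b * norm (matrix_inv R) * b" for t
    using nb[of t] by (intro mult_mono mult_right_mono) (auto simp: norm_transpose)
  then have "norm (transpose (regressor t) ** matrix_inv R ** regressor t) \<le> b * norm (matrix_inv R) * b" for t
    by (rule order_trans[OF norm_matrix_mult3_le])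
  then show "bounded (range (\<lambda>t. transpose (regressor t) ** matrix_inv R ** regressor t))"
    unfolding bounded_iff by blast
qed (use P_deriv riccati P0_pd Q_pd in \<open>simp_all add: regressor_def matrix_mul_assoc\<close>)

lemma tracking_error_has_derivative:
  "0 \<le> t \<Longrightarrow> (tracking_error has_vector_derivative q1 t - qd1 t) (at t within {0..})"
  unfolding tracking_error_def[abs_def] by (rule has_vector_derivative_diff[OF q_deriv qd_deriv])

lemma sliding_has_derivative:
  "0 \<le> t \<Longrightarrow> (sliding has_vector_derivative q2 t - qd2 t + \<Lambda> *v (q1 t - qd1 t)) (at t within {0..})"
  unfolding sliding_def[abs_def]
  by (intro has_vector_derivative_add has_vector_derivative_diff q1_deriv qd1_deriv
      bounded_linear.has_vector_derivative[OF matrix_vector_mul_bounded_linear tracking_error_has_derivative])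

lemma sliding_closed_loop:
  assumes "0 \<le> t"
  shows "M (q t) *v (q2 t - qd2 t + \<Lambda> *v (q1 t - qd1 t))
    = - (C (q t) (q1 t) *v sliding t) - K *v sliding t - regressor t *v param_error t + repr_error t"
proof -
  define qr1 where "qr1 = qd1 t - \<Lambda> *v (q t - qd t)"
  define qr2 where "qr2 = qd2 t - \<Lambda> *v (q1 t - qd1 t)"
  have s: "sliding t = q1 t - qr1"
    by (simp add: sliding_def tracking_error_def qr1_def matrix_vector_mult_diff_right)
  have qr2: "q2 t - qd2 t + \<Lambda> *v (q1 t - qd1 t) = q2 t - qr2" by (simp add: qr2_def)
  have "M (q t) *v (q2 t - qd2 t + \<Lambda> *v (q1 t - qd1 t)) = M (q t) *v q2 t - M (q t) *v qr2"
    unfolding qr2 by (rule matrix_vector_mult_diff_right)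
  also have "M (q t) *v q2 t = u t + f (q t) (q1 t) (w t) - C (q t) (q1 t) *v q1 t - g (q t)"
    using dynamics[OF assms] by (simp add: algebra_simps)
  also have "u t = M (q t) *v qr2 + C (q t) (q1 t) *v qr1 + g (q t) - K *v sliding t
      - regressor t *v (param_error t + a t)"
    using control[OF assms] by (simp add: s qr1_def qr2_def regressor_def param_error_def)
  finally show ?thesis
    by (simp add: s repr_error_def matrix_vector_mult_diff_right matrix_vector_right_distrib algebra_simps)
qed

lemma param_error_closed_loop:
  assumes "0 \<le> t"
  shows "ah1 t - a1 t = - lam *\<^sub>R (param_error t + a t)
    - P t *v (transpose (regressor t) *v (matrix_inv R *v (regressor t *v param_error t - repr_error t - eps t)))
    + P t *v (transpose (regressor t) *v sliding t) - a1 t"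
proof -
  have regression_error: "\<phi> (q t) (q1 t) *v ah t - (f (q t) (q1 t) (w t) + eps t)
      = regressor t *v param_error t - repr_error t - eps t"
    by (simp add: regressor_def param_error_def repr_error_def matrix_vector_mult_diff_right algebra_simps)
  have "q1 t - (qd1 t - \<Lambda> *v (q t - qd t)) = sliding t"
    by (simp add: sliding_def tracking_error_def)
  then show ?thesis
    using adaptation[OF assms] unfolding regression_error
    by (simp add: param_error_def regressor_def del: transpose_matrix_vector)
qed

lemma lyapunov_eq:
  assumes "0 \<le> t"
  defines "z \<equiv> matrix_inv (P t) *v param_error t"
  shows "P t *v z = param_error t"
    and "lyapunov t = sliding t \<bullet> (M (q t) *v sliding t) + z \<bullet> (P t *v z)"
proof -
  show Pz: "P t *v z = param_error t"
    using pos_def_matrix_inv(1)[OF riccati.pos_def[OF \<open>0 \<le> t\<close>]] by (simp add: z_def matrix_vector_mul_assoc)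
  show "lyapunov t = sliding t \<bullet> (M (q t) *v sliding t) + z \<bullet> (P t *v z)"
    unfolding lyapunov_def Pz by (simp add: z_def inner_commute)
qed

lemma sliding_le_lyapunov:
  assumes "0 \<le> t"
  shows "m1 * (norm (sliding t))\<^sup>2 \<le> lyapunov t"
proof -
  let ?z = "matrix_inv (P t) *v param_error t"
  have "0 \<le> ?z \<bullet> (P t *v ?z)"
    using riccati.pos_def[OF assms] unfolding pos_def_def by (cases "?z = 0") (auto intro: less_imp_le)
  then show ?thesis using lyapunov_eq[OF assms] M_lower[of "sliding t" "q t"] by linarith
qed

lemma disturbance_nonneg: "0 \<le> disturbance t"
  using lam_pos by (simp add: disturbance_def)

lemma norm_le_disturbance:
  "norm (repr_error t) \<le> disturbance t" "norm (repr_error t + eps t) \<le> disturbance t"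
  "norm (lam *\<^sub>R a t + a1 t) \<le> disturbance t"
proof -
  have "norm (repr_error t + eps t) \<le> norm (repr_error t) + norm (eps t)"
    "norm (lam *\<^sub>R a t + a1 t) \<le> lam * norm (a t) + norm (a1 t)" "0 \<le> lam * norm (a t)"
    using norm_triangle_ineq[of "repr_error t" "eps t"] norm_triangle_ineq[of "lam *\<^sub>R a t" "a1 t"] lam_pos
    by auto
  then show "norm (repr_error t) \<le> disturbance t" "norm (repr_error t + eps t) \<le> disturbance t"
    "norm (lam *\<^sub>R a t + a1 t) \<le> disturbance t"
    using norm_ge_zero[of "eps t"] norm_ge_zero[of "a1 t"] norm_ge_zero[of "repr_error t"]
    unfolding disturbance_def by linarith+
qed

lemma lyapunov_has_derivative:
  assumes "0 \<le> t"
  shows "(lyapunov has_real_derivative lyapunov_deriv t) (at t within {0..})"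
proof -
  define W where "W s = matrix_inv (P s)" for s
  define z where "z = W t *v param_error t"
  have "((\<lambda>t. M (q t)) has_vector_derivative DM (q t) (q1 t)) (at t within {0..})"
    using vector_derivative_diff_chain_within[OF q_deriv[OF assms] has_derivative_at_withinI[OF M_deriv]]
    by (simp add: o_def)
  from has_real_derivative_symmetric_quadratic_form[OF sliding_has_derivative[OF assms] this M_sym]
  have sliding_part: "((\<lambda>t. sliding t \<bullet> (M (q t) *v sliding t)) has_real_derivative
      2 * (sliding t \<bullet> (M (q t) *v (q2 t - qd2 t + \<Lambda> *v (q1 t - qd1 t))))
      + sliding t \<bullet> (DM (q t) (q1 t) *v sliding t)) (at t within {0..})" .
  have W_sym: "transpose (W t) = W t"
    unfolding W_def by (rule pos_def_transpose_matrix_inv[OF riccati.pos_def[OF assms]])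
  have "(param_error has_vector_derivative ah1 t - a1 t) (at t within {0..})"
    unfolding param_error_def[abs_def] by (rule has_vector_derivative_diff[OF ah_deriv[OF assms] a_deriv[OF assms]])
  moreover have "(W has_vector_derivative - (W t ** P1 t ** W t)) (at t within {0..})"
    unfolding W_def[abs_def] using P_deriv[OF assms] riccati.pos_def assms
    by (intro has_vector_derivative_matrix_inv) auto
  ultimately have param_part: "((\<lambda>t. param_error t \<bullet> (W t *v param_error t)) has_real_derivative
      2 * (param_error t \<bullet> (W t *v (ah1 t - a1 t))) + param_error t \<bullet> (- (W t ** P1 t ** W t) *v param_error t))
      (at t within {0..})"
    using W_sym by (rule has_real_derivative_symmetric_quadratic_form)
  have z: "param_error t \<bullet> (W t *v y) = z \<bullet> y" for y
    using inner_matrix_vector_mult_transpose[of "param_error t" "W t" y] W_sym by (simp add: z_def)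
  have "param_error t \<bullet> (- (W t ** P1 t ** W t) *v param_error t) = - (z \<bullet> (P1 t *v z))"
    using z[of "P1 t *v z"] by (simp add: z_def matrix_vector_mult_minus_left flip: matrix_vector_mul_assoc)
  then show ?thesis
    using DERIV_add[OF sliding_part param_part] z
    unfolding lyapunov_def[abs_def] lyapunov_deriv_def Let_def W_def z_def by (simp add: add_diff_eq)
qed

lemma decay_rate_mult_lyapunov_le:
  assumes "riccati.warmup_time \<le> t"
  shows "decay_rate * lyapunov t
    \<le> cK * (norm (sliding t))\<^sup>2 + cQ / 2 * (norm (matrix_inv (P t) *v param_error t))\<^sup>2"
proof -
  have "0 \<le> t" using riccati.warmup_time_nonneg[OF lam_pos] assms by linarith
  define s where "s = sliding t"
  define z where "z = matrix_inv (P t) *v param_error t"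
  have "0 < m2" using m1_pos m1_le_m2 by linarith
  have "0 \<le> m1 * (norm s)\<^sup>2" using m1_pos by simp
  then have "0 \<le> s \<bullet> (M (q t) *v s)" using M_lower[of s "q t"] by linarith
  then have "decay_rate * (s \<bullet> (M (q t) *v s)) \<le> cK * (norm s)\<^sup>2"
    using decay_rate_pos M_upper[of s "q t"] \<open>0 < m2\<close>
    by (intro mult_le_by_ratio_bound[where c = m2]) (auto simp: decay_rate_def)
  moreover have "decay_rate * (z \<bullet> (P t *v z)) \<le> cQ / 2 * (norm z)\<^sup>2"
  proof (rule mult_le_by_ratio_bound[where c = P_bound])
    show "z \<bullet> (P t *v z) \<le> P_bound * (norm z)\<^sup>2"
      unfolding P_bound_def by (rule riccati.quadratic_form_le_after_warmup[OF lam_pos assms])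
    show "0 \<le> z \<bullet> (P t *v z)"
      using riccati.pos_def[OF \<open>0 \<le> t\<close>] unfolding pos_def_def by (cases "z = 0") (auto intro: less_imp_le)
  qed (use decay_rate_pos lam_pos in \<open>auto simp: decay_rate_def P_bound_def add_pos_nonneg\<close>)
  ultimately show ?thesis
    using lyapunov_eq(2)[OF \<open>0 \<le> t\<close>] unfolding s_def z_def by (simp add: algebra_simps)
qed

lemma lyapunov_deriv_le:
  assumes "riccati.warmup_time \<le> t"
  shows "lyapunov_deriv t \<le> - decay_rate * lyapunov t + noise_gain * (disturbance t)\<^sup>2"
proof -
  have "0 \<le> t" using riccati.warmup_time_nonneg[OF lam_pos] assms by linarith
  define s where "s = sliding t"
  define z where "z = matrix_inv (P t) *v param_error t"
  note Pz = lyapunov_eq(1)[OF \<open>0 \<le> t\<close>, folded z_def]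
  have Ri: "transpose (matrix_inv R) = matrix_inv R" "\<And>y. 0 \<le> y \<bullet> (matrix_inv R *v y)"
    using pos_def_transpose_matrix_inv[OF R_pd] pos_def_matrix_inv_psd[OF R_pd] by auto
  have "lyapunov_deriv t = - 2 * (s \<bullet> (K *v s)) + 2 * (s \<bullet> repr_error t) - 2 * (z \<bullet> (lam *\<^sub>R a t + a1 t))
      + (2 * ((regressor t *v param_error t) \<bullet> (matrix_inv R *v (repr_error t + eps t)))
        - (regressor t *v param_error t) \<bullet> (matrix_inv R *v (regressor t *v param_error t)))
      - z \<bullet> (Q *v z)"
    unfolding lyapunov_deriv_def Let_def s_def z_def[symmetric]
    by (rule closed_loop_lyapunov_derivative_eq[OF sliding_closed_loop[OF \<open>0 \<le> t\<close>] skew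
          riccati.symmetric[OF \<open>0 \<le> t\<close>] Pz param_error_closed_loop[OF \<open>0 \<le> t\<close>]
          riccati[OF \<open>0 \<le> t\<close>, folded regressor_def]])
  also have "\<dots> \<le> - cK * (norm s)\<^sup>2 - cQ / 2 * (norm z)\<^sup>2 + noise_gain * (disturbance t)\<^sup>2"
    unfolding noise_gain_def
    by (rule closed_loop_lyapunov_derivative_le[OF K_lower cK_pos Q_lower cQ_pos Ri norm_le_disturbance])
  also have "\<dots> \<le> - decay_rate * lyapunov t + noise_gain * (disturbance t)\<^sup>2"
    using decay_rate_mult_lyapunov_le[OF assms] unfolding s_def z_def by linarith
  finally show ?thesis .
qed

lemma lyapunov_le:
  assumes bound: "\<And>t. 0 \<le> t \<Longrightarrow> disturbance t \<le> b" and "riccati.warmup_time \<le> t"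
  shows "lyapunov t \<le> max 0 (lyapunov riccati.warmup_time) * exp (- decay_rate * (t - riccati.warmup_time))
    + noise_gain * b\<^sup>2 / decay_rate"
proof (rule deriv_le_linear_imp_le_exp_decay[where y' = lyapunov_deriv and A = 0 and D = "noise_gain * b\<^sup>2"])
  have T: "0 \<le> riccati.warmup_time" by (rule riccati.warmup_time_nonneg[OF lam_pos])
  fix s assume s: "riccati.warmup_time \<le> s"
  then have "0 \<le> s" using T by linarith
  show "(lyapunov has_real_derivative lyapunov_deriv s) (at s within {riccati.warmup_time..})"
    using lyapunov_has_derivative[OF \<open>0 \<le> s\<close>] by (rule DERIV_subset) (use T in auto)
  have "(disturbance s)\<^sup>2 \<le> b\<^sup>2"
    using bound[OF \<open>0 \<le> s\<close>] disturbance_nonneg by (intro power_mono)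
  then have "noise_gain * (disturbance s)\<^sup>2 \<le> noise_gain * b\<^sup>2"
    using noise_gain_pos by (intro mult_left_mono) auto
  then show "lyapunov_deriv s \<le> - decay_rate * lyapunov s
      + 0 * exp (- decay_rate * (s - riccati.warmup_time)) + noise_gain * b\<^sup>2"
    using lyapunov_deriv_le[OF s] by simp
next
  have "0 \<le> noise_gain * b\<^sup>2 / decay_rate" using noise_gain_pos decay_rate_pos by simp
  then show "lyapunov riccati.warmup_time \<le> max 0 (lyapunov riccati.warmup_time) + noise_gain * b\<^sup>2 / decay_rate"
    using max.cobounded2[of 0 "lyapunov riccati.warmup_time"] by linarith
qed (use assms decay_rate_pos in auto)

lemma sliding_sq_le:
  assumes bound: "\<And>t. 0 \<le> t \<Longrightarrow> disturbance t \<le> b" and "riccati.warmup_time \<le> t" "\<mu> \<le> decay_rate"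
  shows "m1 * (norm (sliding t))\<^sup>2 \<le> max 0 (lyapunov riccati.warmup_time) * exp (- \<mu> * (t - riccati.warmup_time))
    + noise_gain * b\<^sup>2 / decay_rate"
proof -
  have "0 \<le> t" using riccati.warmup_time_nonneg[OF lam_pos] assms(2) by linarith
  have "exp (- decay_rate * (t - riccati.warmup_time)) \<le> exp (- \<mu> * (t - riccati.warmup_time))"
    using assms(2,3) by (simp add: mult_right_mono)
  then have "max 0 (lyapunov riccati.warmup_time) * exp (- decay_rate * (t - riccati.warmup_time))
      \<le> max 0 (lyapunov riccati.warmup_time) * exp (- \<mu> * (t - riccati.warmup_time))"
    by (intro mult_left_mono) auto
  then show ?thesis
    using sliding_le_lyapunov[OF \<open>0 \<le> t\<close>] lyapunov_le[OF bound assms(2)] by linarith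
qed

lemma tracking_error_sq_deriv_le:
  "2 * (tracking_error t \<bullet> (sliding t - \<Lambda> *v tracking_error t))
    \<le> - c\<Lambda> * (norm (tracking_error t))\<^sup>2 + (norm (sliding t))\<^sup>2 / c\<Lambda>"
proof -
  let ?e = "tracking_error t" and ?s = "sliding t"
  have "2 * (?e \<bullet> ?s) \<le> c\<Lambda> * (norm ?e)\<^sup>2 + (norm ?s)\<^sup>2 / c\<Lambda>"
    using norm_cauchy_schwarz[of ?e ?s] two_mult_le_weighted_squares[OF c\<Lambda>_pos, of "norm ?e" "norm ?s"]
    by linarith
  then show ?thesis using \<Lambda>_lower[of ?e] by (simp add: inner_diff_right)
qed

text \<open>The rate 2 * convergence_rate = min c\<Lambda> decay_rate / 2 is chosen strictly below c\<Lambda>, so that the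
  decaying part of the forcing through the sliding variable can be absorbed.\<close>

lemma tracking_error_sq_le:
  assumes bound: "\<And>t. 0 \<le> t \<Longrightarrow> disturbance t \<le> b"
  obtains c where "0 \<le> c" "\<And>t. riccati.warmup_time \<le> t \<Longrightarrow>
    (norm (tracking_error t))\<^sup>2 \<le> c * exp (- (2 * convergence_rate) * (t - riccati.warmup_time))
      + (error_gain * b)\<^sup>2"
proof -
  define T where "T = riccati.warmup_time"
  define \<mu> where "\<mu> = 2 * convergence_rate"
  define A where "A = max 0 (lyapunov T) / (m1 * c\<Lambda>)"
  define D where "D = noise_gain * b\<^sup>2 / (decay_rate * m1 * c\<Lambda>)"
  define c where "c = max 0 (tracking_error T \<bullet> tracking_error T) + A / (c\<Lambda> - \<mu>)"
  have T: "0 \<le> T" unfolding T_def by (rule riccati.warmup_time_nonneg[OF lam_pos])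
  have \<mu>: "0 < \<mu>" "\<mu> \<le> decay_rate" "\<mu> < c\<Lambda>"
    using decay_rate_pos c\<Lambda>_pos by (auto simp: \<mu>_def convergence_rate_def)
  have "0 \<le> A" "0 \<le> D" using m1_pos c\<Lambda>_pos noise_gain_pos decay_rate_pos by (auto simp: A_def D_def)
  have forcing: "(norm (sliding t))\<^sup>2 / c\<Lambda> \<le> A * exp (- \<mu> * (t - T)) + D" if "T \<le> t" for t
    using sliding_sq_le[OF bound that[unfolded T_def] \<open>\<mu> \<le> decay_rate\<close>] m1_pos c\<Lambda>_pos
    by (simp add: A_def D_def T_def field_simps)
  have "(\<lambda>t. tracking_error t \<bullet> tracking_error t) t \<le> c * exp (- \<mu> * (t - T)) + D / c\<Lambda>" if "T \<le> t" for t
  proof (rule deriv_le_linear_imp_le_exp_decay[OF c\<Lambda>_pos _ _ _ _ that])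
    fix s assume "T \<le> s"
    then show "((\<lambda>t. tracking_error t \<bullet> tracking_error t) has_real_derivative
        2 * (tracking_error s \<bullet> (sliding s - \<Lambda> *v tracking_error s))) (at s within {T..})"
      using has_real_derivative_inner[OF tracking_error_has_derivative tracking_error_has_derivative, of s] T
      by (auto simp: sliding_def inner_commute intro: DERIV_subset)
    show "2 * (tracking_error s \<bullet> (sliding s - \<Lambda> *v tracking_error s))
        \<le> - c\<Lambda> * (tracking_error s \<bullet> tracking_error s) + A * exp (- \<mu> * (s - T)) + D"
      using tracking_error_sq_deriv_le[of s] forcing[OF \<open>T \<le> s\<close>] by (simp add: power2_norm_eq_inner)
  next
    have "c\<Lambda> - \<mu> \<noteq> 0" using \<mu> by simp
    then have "(c\<Lambda> - \<mu>) * c = (c\<Lambda> - \<mu>) * max 0 (tracking_error T \<bullet> tracking_error T) + A"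
      by (simp add: c_def distrib_left)
    moreover have "0 \<le> (c\<Lambda> - \<mu>) * max 0 (tracking_error T \<bullet> tracking_error T)"
      using \<mu> by simp
    ultimately show "A \<le> (c\<Lambda> - \<mu>) * c" by linarith
    have "0 \<le> A / (c\<Lambda> - \<mu>)" "0 \<le> D / c\<Lambda>" using \<mu> \<open>0 \<le> A\<close> \<open>0 \<le> D\<close> c\<Lambda>_pos by simp_all
    then show "tracking_error T \<bullet> tracking_error T \<le> c + D / c\<Lambda>"
      using max.cobounded2[of 0 "tracking_error T \<bullet> tracking_error T"] unfolding c_def by linarith
  qed
  moreover have "D / c\<Lambda> = (error_gain * b)\<^sup>2"
    unfolding error_gain_sq by (simp add: D_def power2_eq_square mult_ac)
  moreover have "0 \<le> c" using \<mu> \<open>0 \<le> A\<close> by (simp add: c_def)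
  ultimately show ?thesis
    using that by (simp add: T_def \<mu>_def power2_norm_eq_inner)
qed

lemma tracking_error_le:
  assumes bound: "\<And>t. 0 \<le> t \<Longrightarrow> error_gain * disturbance t \<le> r"
  obtains c where "\<And>t. riccati.warmup_time \<le> t \<Longrightarrow>
    norm (tracking_error t) \<le> c * exp (- convergence_rate * (t - riccati.warmup_time)) + r"
proof -
  define b where "b = r / error_gain"
  have disturbance_le: "disturbance t \<le> b" if "0 \<le> t" for t
    using bound[OF that] error_gain_pos by (simp add: b_def pos_le_divide_eq mult.commute)
  obtain c where "0 \<le> c" and sq: "\<And>t. riccati.warmup_time \<le> t \<Longrightarrow>
      (norm (tracking_error t))\<^sup>2 \<le> c * exp (- (2 * convergence_rate) * (t - riccati.warmup_time))
        + (error_gain * b)\<^sup>2"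
    using tracking_error_sq_le[OF disturbance_le] by blast
  have "0 \<le> b" using disturbance_le[of 0] disturbance_nonneg[of 0] by linarith
  have "norm (tracking_error t) \<le> sqrt c * exp (- convergence_rate * (t - riccati.warmup_time)) + r"
    if "riccati.warmup_time \<le> t" for t
  proof -
    have "norm (tracking_error t) \<le> sqrt (c * exp (- (2 * convergence_rate) * (t - riccati.warmup_time))
        + (error_gain * b)\<^sup>2)"
      using sq[OF that] by (simp add: real_le_rsqrt)
    also have "\<dots> \<le> sqrt (c * exp (- (2 * convergence_rate) * (t - riccati.warmup_time)))
        + sqrt ((error_gain * b)\<^sup>2)"
      using \<open>0 \<le> c\<close> by (intro sqrt_add_le_add_sqrt) auto
    also have "sqrt (c * exp (- (2 * convergence_rate) * (t - riccati.warmup_time)))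
        = sqrt c * exp (- convergence_rate * (t - riccati.warmup_time))"
      by (simp add: real_sqrt_mult sqrt_exp)
    also have "sqrt ((error_gain * b)\<^sup>2) = r"
      using \<open>0 \<le> b\<close> error_gain_pos by (simp add: b_def zero_le_divide_iff)
    finally show ?thesis .
  qed
  then show ?thesis using that by blast
qed

lemma tracking_error_bounds:
  defines "\<rho> \<equiv> SUP t\<in>{0..}. ereal (error_gain * disturbance t)"
  shows "(\<exists>c0. \<forall>t\<ge>0. ereal (norm (tracking_error t)) \<le> ereal (c0 * exp (- convergence_rate * t)) + \<rho>)
    \<and> Limsup at_top (\<lambda>t. ereal (norm (tracking_error t))) \<le> \<rho>"
  unfolding \<rho>_def
proof (rule exp_decay_bound_imp_ereal_bounds[OF convergence_rate_pos])
  fix r assume r: "\<And>t. 0 \<le> t \<Longrightarrow> error_gain * disturbance t \<le> r"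
  obtain c where late: "\<And>t. riccati.warmup_time \<le> t \<Longrightarrow>
      norm (tracking_error t) \<le> c * exp (- convergence_rate * (t - riccati.warmup_time)) + r"
    using tracking_error_le[OF r] by blast
  have "continuous_on {0..} tracking_error"
    unfolding continuous_on_eq_continuous_within
    using has_vector_derivative_continuous[OF tracking_error_has_derivative] by auto
  then have "continuous_on {0..riccati.warmup_time} (\<lambda>t. norm (tracking_error t))"
    by (intro continuous_on_norm) (rule continuous_on_subset, auto)
  moreover have "0 \<le> r"
    using r[of 0] mult_nonneg_nonneg[OF less_imp_le[OF error_gain_pos] disturbance_nonneg[of 0]] by simp
  ultimately obtain c0 where "\<And>t. 0 \<le> t \<Longrightarrow> norm (tracking_error t) \<le> c0 * exp (- convergence_rate * t) + r"
    using exp_decay_bound_extend_to_0[OF _ less_imp_le[OF convergence_rate_pos] _ late] by blast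
  then show "\<exists>c0. \<forall>t\<ge>0. norm (tracking_error t) \<le> c0 * exp (- convergence_rate * t) + r" by blast
qed

end

theorem theorem1:
  fixes M :: "real^'n \<Rightarrow> real^'n^'n"
    and DM :: "real^'n \<Rightarrow> real^'n \<Rightarrow> real^'n^'n"
    and C :: "real^'n \<Rightarrow> real^'n \<Rightarrow> real^'n^'n"
    and \<phi> :: "real^'n \<Rightarrow> real^'n \<Rightarrow> real^'h^'n"
    and K \<Lambda> R :: "real^'n^'n"
    and Q :: "real^'h^'h"
    and lam :: real
  assumes M_pd: "\<And>x. pos_def (M x)"
    and M_unif: "\<exists>m1 m2. 0 < m1 \<and> m1 \<le> m2 \<and>
                   (\<forall>x v. m1 * (norm v)\<^sup>2 \<le> v \<bullet> (M x *v v) \<and> v \<bullet> (M x *v v) \<le> m2 * (norm v)\<^sup>2)"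
    and M_deriv: "\<And>x. (M has_derivative DM x) (at x)"
    and skew: "\<And>x v. skew_symmetric (DM x v - 2 *\<^sub>R C x v)"
    and \<phi>_bounded: "\<exists>B. \<forall>x xd z. norm (\<phi> x xd *v z) \<le> B * norm z"
    and K_pd: "pos_def K" and \<Lambda>_pd: "pos_def \<Lambda>"
    and Q_pd: "pos_def Q" and R_pd: "pos_def R"
    and lam_pos: "lam > 0"
  shows "\<exists>\<alpha>>0. \<exists>C1 C2 C3. C1 \<ge> 0 \<and> C2 \<ge> 0 \<and> C3 \<ge> 0 \<and>
    (\<forall>(g :: real^'n \<Rightarrow> real^'n) (f :: real^'n \<Rightarrow> real^'n \<Rightarrow> 'w \<Rightarrow> real^'n) (w :: real \<Rightarrow> 'w)
      (q :: real \<Rightarrow> real^'n) q1 q2 (qd :: real \<Rightarrow> real^'n) qd1 qd2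
      (u :: real \<Rightarrow> real^'n) (ah :: real \<Rightarrow> real^'h) ah1 (P :: real \<Rightarrow> real^'h^'h) P1
      (a :: real \<Rightarrow> real^'h) a1 (eps :: real \<Rightarrow> real^'n).
      (\<forall>t\<ge>0. (q has_vector_derivative q1 t) (at t within {0..}) \<and>
              (q1 has_vector_derivative q2 t) (at t within {0..}) \<and>
              (qd has_vector_derivative qd1 t) (at t within {0..}) \<and>
              (qd1 has_vector_derivative qd2 t) (at t within {0..}) \<and>
              (ah has_vector_derivative ah1 t) (at t within {0..}) \<and>
              (P has_vector_derivative P1 t) (at t within {0..}) \<and>
              (a has_vector_derivative a1 t) (at t within {0..})) \<longrightarrow>
      bounded (qd1 ` {0..}) \<longrightarrow> bounded (qd2 ` {0..}) \<longrightarrow>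
      bounded (eps ` {0..}) \<longrightarrow>
      pos_def (P 0) \<longrightarrow>
      (\<forall>t\<ge>0. M (q t) *v q2 t + C (q t) (q1 t) *v q1 t + g (q t) = u t + f (q t) (q1 t) (w t)) \<longrightarrow>
      (\<forall>t\<ge>0.
         let qr1 = qd1 t - \<Lambda> *v (q t - qd t);
             qr2 = qd2 t - \<Lambda> *v (q1 t - qd1 t);
             s = q1 t - qr1;
             \<Phi> = \<phi> (q t) (q1 t);
             y = f (q t) (q1 t) (w t) + eps t
         in u t = M (q t) *v qr2 + C (q t) (q1 t) *v qr1 + g (q t) - K *v s - \<Phi> *v ah t
          \<and> ah1 t = - lam *\<^sub>R ah t - P t *v (transpose \<Phi> *v (matrix_inv R *v (\<Phi> *v ah t - y)))
                     + P t *v (transpose \<Phi> *v s)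
          \<and> P1 t = (- 2 * lam) *\<^sub>R P t + Q - P t ** transpose \<Phi> ** matrix_inv R ** \<Phi> ** P t) \<longrightarrow>
      (let d = (\<lambda>t. f (q t) (q1 t) (w t) - \<phi> (q t) (q1 t) *v a t);
           \<rho> = (SUP t\<in>{0..}. ereal (C1 * norm (d t) + C2 * norm (eps t)
                                     + C3 * (lam * norm (a t) + norm (a1 t))))
       in (\<exists>c0. \<forall>t\<ge>0. ereal (norm (q t - qd t)) \<le> ereal (c0 * exp (- \<alpha> * t)) + \<rho>)
          \<and> Limsup at_top (\<lambda>t. ereal (norm (q t - qd t))) \<le> \<rho>))"
proof -
  obtain m1 m2 where m: "0 < m1" "m1 \<le> m2" "\<And>x v. m1 * (norm v)\<^sup>2 \<le> v \<bullet> (M x *v v)"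
    "\<And>x v. v \<bullet> (M x *v v) \<le> m2 * (norm v)\<^sup>2"
    using M_unif by blast
  obtain B where "\<And>x xd z. norm (\<phi> x xd *v z) \<le> B * norm z" using \<phi>_bounded by blast
  moreover obtain cK where "0 < cK" "\<And>x. cK * (norm x)\<^sup>2 \<le> x \<bullet> (K *v x)"
    using pos_def_quadratic_lower_bound[OF K_pd] by blast
  moreover obtain c\<Lambda> where "0 < c\<Lambda>" "\<And>x. c\<Lambda> * (norm x)\<^sup>2 \<le> x \<bullet> (\<Lambda> *v x)"
    using pos_def_quadratic_lower_bound[OF \<Lambda>_pd] by blast
  moreover obtain cQ where "0 < cQ" "\<And>x. cQ * (norm x)\<^sup>2 \<le> x \<bullet> (Q *v x)"
    using pos_def_quadratic_lower_bound[OF Q_pd] by blast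
  ultimately interpret robot_gains M DM C \<phi> K \<Lambda> R Q lam m1 m2 B cK c\<Lambda> cQ
    using M_pd m M_deriv skew Q_pd R_pd lam_pos by unfold_locales (auto simp: pos_def_def)
  show ?thesis
    apply (rule exI[of _ convergence_rate])
    apply (intro conjI convergence_rate_pos exI[of _ error_gain] less_imp_le[OF error_gain_pos] allI impI)
    subgoal premises hyps for g f w q q1 q2 qd qd1 qd2 u ah ah1 P P1 a a1 eps
    proof -
      interpret closed_loop M DM C \<phi> K \<Lambda> R Q lam m1 m2 B cK c\<Lambda> cQ
        g f w q q1 q2 qd qd1 qd2 u ah ah1 P P1 a a1 eps
        using hyps by unfold_locales (auto simp: Let_def)
      have "error_gain * norm (f (q t) (q1 t) (w t) - \<phi> (q t) (q1 t) *v a t) + error_gain * norm (eps t)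
          + error_gain * (lam * norm (a t) + norm (a1 t)) = error_gain * disturbance t" for t
        by (simp add: disturbance_def repr_error_def regressor_def algebra_simps)
      then show ?thesis
        using tracking_error_bounds by (simp add: Let_def tracking_error_def)
    qed
    done
qed

end
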